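(* Let $\mathbb{K}$ be a field, $Q$ a Dynkin quiver, $\Lambda=\mathbb{K}Q$, $k\ge1$, and let $0\to M\to K\to N\to 0$ be an exact sequence in $\operatorname{mod}\Lambda$. Then the functor $\operatorname{Hom}_{\mathcal{S}^k}(\mathcal{P},-)$ is left exact on the sequence $0\to M\to K\to N\to M[1]\to K[1]\to N[1]\to M[2]\to\cdots\to M[k]\to K[k]\to N[k]\to 0$ in $\mathcal{S}^k$; that is, the induced sequence $0\to\operatorname{Hom}_{\mathcal{S}^k}(\mathcal{P},M)\to\operatorname{Hom}_{\mathcal{S}^k}(\mathcal{P},K)\to\cdots\to\operatorname{Hom}_{\mathcal{S}^k}(\mathcal{P},N[k])$ is exact.
   Context: $D^b(\operatorname{mod}\Lambda)$ is the bounded derived category with shift $[1]$. $\mathcal{S}^k$ is the full subcategory of $D^b(\operatorname{mod}\Lambda)$ with objects $X[j]$, $X\in\operatorname{mod}\Lambda$, $0\le j\le k$, and $\operatorname{Hom}_{\mathcal{S}^k}(X[i],Y[j])=\operatorname{Hom}_\Lambda(X,Y)$ if $i=j$, $\operatorname{Ext}^1_\Lambda(X,Y)$ if $i=j-1$, $0$ otherwise. $\mathcal{P}=\bigoplus_{0\le j\le k}G[j]$ where $G$ is the direct sum of representatives of the indecomposable $\Lambda$-modules. The displayed sequence consists of the shifts of the triangle $M\to K\to N\to M[1]$ induced by the short exact sequence (the map $N\to M[1]$ being the extension class), truncated to shifts $0,\dots,k$. *)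

theory Defs
  imports "Jordan_Normal_Form.Matrix" "HOL-Library.Multiset"
begin

text \<open>A finite quiver: vertices 0..nv-1, arrows indexed by positions of the list arr,
  arrow a goes from fst (arr!a) to snd (arr!a). Multiple arrows allowed.\<close>
record quiver =
  nv :: nat
  arr :: "(nat \<times> nat) list"

definition src :: "quiver \<Rightarrow> nat \<Rightarrow> nat" where "src Q a = fst (arr Q ! a)"
definition tgt :: "quiver \<Rightarrow> nat \<Rightarrow> nat" where "tgt Q a = snd (arr Q ! a)"

text \<open>Standard edge multisets of the Dynkin diagrams A_n, D_n, E_6, E_7, E_8 on {0..n-1}.\<close>
definition path_edges :: "nat \<Rightarrow> nat set multiset" where
  "path_edges m = mset (map (\<lambda>i. {i, Suc i}) [0..<m])"

definition dynkin_edges :: "nat \<Rightarrow> nat set multiset set" where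
  "dynkin_edges n =
     (if n \<ge> 1 then {path_edges (n - 1)} else {})
   \<union> (if n \<ge> 4 then {path_edges (n - 2) + {#{n - 3, n - 1}#}} else {})
   \<union> (if n \<in> {6, 7, 8} then {path_edges (n - 2) + {#{2, n - 1}#}} else {})"

definition dynkin :: "quiver \<Rightarrow> bool" where
  "dynkin Q \<longleftrightarrow> (\<forall>(s,t)\<in>set (arr Q). s < nv Q \<and> t < nv Q) \<and>
     (\<exists>\<sigma>. bij_betw \<sigma> {..<nv Q} {..<nv Q} \<and>
        mset (map (\<lambda>(s,t). {\<sigma> s, \<sigma> t}) (arr Q)) \<in> dynkin_edges (nv Q))"

record 'k rep =
  rdim :: "nat \<Rightarrow> nat"
  rmat :: "nat \<Rightarrow> 'k mat"

definition valid_rep :: "quiver \<Rightarrow> 'k rep \<Rightarrow> bool" where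
  "valid_rep Q X \<longleftrightarrow> (\<forall>a<length (arr Q). rmat X a \<in> carrier_mat (rdim X (tgt Q a)) (rdim X (src Q a)))"

type_synonym 'k rhom = "nat \<Rightarrow> 'k mat"

definition hom :: "quiver \<Rightarrow> 'k::field rep \<Rightarrow> 'k rep \<Rightarrow> 'k rhom set" where
  "hom Q X Y = {f. (\<forall>v<nv Q. f v \<in> carrier_mat (rdim Y v) (rdim X v)) \<and>
                   (\<forall>v. v \<ge> nv Q \<longrightarrow> f v = 0\<^sub>m 0 0) \<and>
                   (\<forall>a<length (arr Q). rmat Y a * f (src Q a) = f (tgt Q a) * rmat X a)}"

definition comp :: "quiver \<Rightarrow> 'k::field rhom \<Rightarrow> 'k rhom \<Rightarrow> 'k rhom" where
  "comp Q g f = (\<lambda>v. if v < nv Q then g v * f v else 0\<^sub>m 0 0)"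

definition idh :: "quiver \<Rightarrow> 'k::field rep \<Rightarrow> 'k rhom" where
  "idh Q X = (\<lambda>v. if v < nv Q then 1\<^sub>m (rdim X v) else 0\<^sub>m 0 0)"

definition zeroh :: "quiver \<Rightarrow> 'k::field rep \<Rightarrow> 'k rep \<Rightarrow> 'k rhom" where
  "zeroh Q X Y = (\<lambda>v. if v < nv Q then 0\<^sub>m (rdim Y v) (rdim X v) else 0\<^sub>m 0 0)"

definition ses :: "quiver \<Rightarrow> 'k::field rep \<Rightarrow> 'k rep \<Rightarrow> 'k rep \<Rightarrow> 'k rhom \<Rightarrow> 'k rhom \<Rightarrow> bool" where
  "ses Q Y E X \<alpha> \<beta> \<longleftrightarrow> valid_rep Q Y \<and> valid_rep Q E \<and> valid_rep Q X \<and>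
     \<alpha> \<in> hom Q Y E \<and> \<beta> \<in> hom Q E X \<and>
     (\<forall>v<nv Q.
        (\<forall>x\<in>carrier_vec (rdim Y v). \<alpha> v *\<^sub>v x = 0\<^sub>v (rdim E v) \<longrightarrow> x = 0\<^sub>v (rdim Y v)) \<and>
        (\<forall>z\<in>carrier_vec (rdim X v). \<exists>y\<in>carrier_vec (rdim E v). \<beta> v *\<^sub>v y = z) \<and>
        (\<forall>y\<in>carrier_vec (rdim E v).
            \<beta> v *\<^sub>v y = 0\<^sub>v (rdim X v) \<longleftrightarrow> (\<exists>x\<in>carrier_vec (rdim Y v). \<alpha> v *\<^sub>v x = y)))"

definition dsum :: "quiver \<Rightarrow> 'k::field rep \<Rightarrow> 'k rep \<Rightarrow> 'k rep" where
  "dsum Q X Y = \<lparr>rdim = (\<lambda>v. rdim X v + rdim Y v),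
     rmat = (\<lambda>a. four_block_mat (rmat X a) (0\<^sub>m (rdim X (tgt Q a)) (rdim Y (src Q a)))
                                 (0\<^sub>m (rdim Y (tgt Q a)) (rdim X (src Q a))) (rmat Y a))\<rparr>"

definition zero_rep :: "'k::field rep" where
  "zero_rep = \<lparr>rdim = (\<lambda>v. 0), rmat = (\<lambda>a. 0\<^sub>m 0 0)\<rparr>"

definition dsum_list :: "quiver \<Rightarrow> 'k::field rep list \<Rightarrow> 'k rep" where
  "dsum_list Q Rs = foldr (dsum Q) Rs zero_rep"

definition is_zero_rep :: "quiver \<Rightarrow> 'k rep \<Rightarrow> bool" where
  "is_zero_rep Q X \<longleftrightarrow> (\<forall>v<nv Q. rdim X v = 0)"

definition iso_rep :: "quiver \<Rightarrow> 'k::field rep \<Rightarrow> 'k rep \<Rightarrow> bool" where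
  "iso_rep Q X Y \<longleftrightarrow> (\<exists>f\<in>hom Q X Y. \<exists>g\<in>hom Q Y X. comp Q g f = idh Q X \<and> comp Q f g = idh Q Y)"

definition indec :: "quiver \<Rightarrow> 'k::field rep \<Rightarrow> bool" where
  "indec Q X \<longleftrightarrow> valid_rep Q X \<and> \<not> is_zero_rep Q X \<and>
     (\<forall>A B. valid_rep Q A \<and> valid_rep Q B \<and> iso_rep Q X (dsum Q A B) \<longrightarrow>
            is_zero_rep Q A \<or> is_zero_rep Q B)"

definition is_basic_generator :: "quiver \<Rightarrow> 'k::field rep \<Rightarrow> bool" where
  "is_basic_generator Q G \<longleftrightarrow> (\<exists>Rs. G = dsum_list Q Rs \<and> (\<forall>R\<in>set Rs. indec Q R) \<and>
     (\<forall>i<length Rs. \<forall>j<length Rs. i \<noteq> j \<longrightarrow> \<not> iso_rep Q (Rs ! i) (Rs ! j)) \<and>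
     (\<forall>X. indec Q X \<longrightarrow> (\<exists>R\<in>set Rs. iso_rep Q X R)))"

type_synonym 'k ext = "'k rep \<times> 'k rhom \<times> 'k rhom"

definition ext_of :: "quiver \<Rightarrow> 'k::field rep \<Rightarrow> 'k rep \<Rightarrow> 'k ext \<Rightarrow> bool" where
  "ext_of Q X Y e \<longleftrightarrow> (case e of (E, \<alpha>, \<beta>) \<Rightarrow> ses Q Y E X \<alpha> \<beta>)"

definition ext_hom :: "quiver \<Rightarrow> 'k::field rep \<Rightarrow> 'k rep \<Rightarrow> 'k ext \<Rightarrow> 'k rep \<Rightarrow> 'k rep \<Rightarrow> 'k ext
     \<Rightarrow> 'k rhom \<Rightarrow> 'k rhom \<Rightarrow> 'k rhom \<Rightarrow> bool" where
  "ext_hom Q Y X e Y' X' e' a \<phi> b \<longleftrightarrow>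
     (case e of (E, \<alpha>, \<beta>) \<Rightarrow> case e' of (E', \<alpha>', \<beta>') \<Rightarrow>
       a \<in> hom Q Y Y' \<and> \<phi> \<in> hom Q E E' \<and> b \<in> hom Q X X' \<and>
       comp Q \<phi> \<alpha> = comp Q \<alpha>' a \<and> comp Q \<beta>' \<phi> = comp Q b \<beta>)"

definition ext_cls :: "quiver \<Rightarrow> 'k::field rep \<Rightarrow> 'k rep \<Rightarrow> 'k ext \<Rightarrow> 'k ext set" where
  "ext_cls Q X Y e = {e'. ext_of Q X Y e' \<and> (\<exists>\<phi>. ext_hom Q Y X e Y X e' (idh Q Y) \<phi> (idh Q X))}"

definition Ext1 :: "quiver \<Rightarrow> 'k::field rep \<Rightarrow> 'k rep \<Rightarrow> 'k ext set set" where
  "Ext1 Q X Y = {ext_cls Q X Y e | e. ext_of Q X Y e}"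

text \<open>Zero of Ext^1(X,Y): the class of split extensions.\<close>
definition split_cls :: "quiver \<Rightarrow> 'k::field rep \<Rightarrow> 'k rep \<Rightarrow> 'k ext set" where
  "split_cls Q X Y = {e. ext_of Q X Y e \<and>
      (case e of (E, \<alpha>, \<beta>) \<Rightarrow> \<exists>s\<in>hom Q X E. comp Q \<beta> s = idh Q X)}"

definition push :: "quiver \<Rightarrow> 'k::field rep \<Rightarrow> 'k rep \<Rightarrow> 'k rep \<Rightarrow> 'k rhom \<Rightarrow> 'k ext set \<Rightarrow> 'k ext set" where
  "push Q X Y Y' g c = {e'. ext_of Q X Y' e' \<and>
      (\<exists>e\<in>c. \<exists>\<phi>. ext_hom Q Y X e Y' X e' g \<phi> (idh Q X))}"

definition pull :: "quiver \<Rightarrow> 'k::field rep \<Rightarrow> 'k rep \<Rightarrow> 'k rep \<Rightarrow> 'k rhom \<Rightarrow> 'k ext set \<Rightarrow> 'k ext set" where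
  "pull Q X' X Y f c = {e'. ext_of Q X' Y e' \<and>
      (\<exists>e\<in>c. \<exists>\<phi>. ext_hom Q Y X' e' Y X e (idh Q Y) \<phi> f)}"

text \<open>Morphisms X[i] \<rightarrow> Y[j] in S^k: a module map (i = j), an Ext^1 class (i = j - 1), or 0.\<close>
datatype 'k smor = SHom "'k rhom" | SExt "'k ext set" | SZero

definition shom :: "quiver \<Rightarrow> 'k::field rep \<Rightarrow> nat \<Rightarrow> 'k rep \<Rightarrow> nat \<Rightarrow> 'k smor set" where
  "shom Q X i Y j = (if i = j then SHom ` hom Q X Y
                     else if Suc i = j then SExt ` Ext1 Q X Y else {SZero})"

definition szero :: "quiver \<Rightarrow> 'k::field rep \<Rightarrow> nat \<Rightarrow> 'k rep \<Rightarrow> nat \<Rightarrow> 'k smor" where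
  "szero Q X i Y j = (if i = j then SHom (zeroh Q X Y)
                      else if Suc i = j then SExt (split_cls Q X Y) else SZero)"

text \<open>Composition u \<circ> v for v : W[l] \<rightarrow> X[i], u : X[i] \<rightarrow> Y[j] (as in D^b(mod \<Lambda>)).\<close>
definition scomp :: "quiver \<Rightarrow> 'k::field rep \<Rightarrow> nat \<Rightarrow> 'k rep \<Rightarrow> 'k rep \<Rightarrow> nat
     \<Rightarrow> 'k smor \<Rightarrow> 'k smor \<Rightarrow> 'k smor" where
  "scomp Q W l X Y j u v = (case (u, v) of
      (SHom g, SHom f) \<Rightarrow> SHom (comp Q g f)
    | (SHom g, SExt c) \<Rightarrow> SExt (push Q W X Y g c)
    | (SExt c, SHom f) \<Rightarrow> SExt (pull Q W X Y f c)
    | _ \<Rightarrow> szero Q W l Y j)"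

text \<open>Hom_{S^k}(P, X[i]) for P = \<Oplus>_{0\<le>j\<le>k} G[j]: tuples of components G[j] \<rightarrow> X[i].\<close>
definition homP :: "quiver \<Rightarrow> 'k::field rep \<Rightarrow> nat \<Rightarrow> 'k rep \<Rightarrow> nat \<Rightarrow> (nat \<Rightarrow> 'k smor) set" where
  "homP Q G k X i = {\<phi>. (\<forall>j\<le>k. \<phi> j \<in> shom Q G j X i) \<and> (\<forall>j>k. \<phi> j = SZero)}"

definition zeroP :: "quiver \<Rightarrow> 'k::field rep \<Rightarrow> nat \<Rightarrow> 'k rep \<Rightarrow> nat \<Rightarrow> nat \<Rightarrow> 'k smor" where
  "zeroP Q G k X i = (\<lambda>j. if j \<le> k then szero Q G j X i else SZero)"

definition homP_map :: "quiver \<Rightarrow> 'k::field rep \<Rightarrow> nat \<Rightarrow> 'k rep \<Rightarrow> 'k rep \<Rightarrow> nat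
     \<Rightarrow> 'k smor \<Rightarrow> (nat \<Rightarrow> 'k smor) \<Rightarrow> (nat \<Rightarrow> 'k smor)" where
  "homP_map Q G k X Y j u \<phi> = (\<lambda>l. if l \<le> k then scomp Q G l X Y j u (\<phi> l) else SZero)"

text \<open>Position m (0 \<le> m \<le> 3k+2): object (M, K or N)[m div 3].\<close>
definition seq_obj :: "'k rep \<Rightarrow> 'k rep \<Rightarrow> 'k rep \<Rightarrow> nat \<Rightarrow> 'k rep" where
  "seq_obj M K N m = (if m mod 3 = 0 then M else if m mod 3 = 1 then K else N)"

definition seq_shift :: "nat \<Rightarrow> nat" where
  "seq_shift m = m div 3"

text \<open>Map from position m to m+1: \<iota>[i], p[i], or the extension class \<eta>[i] : N[i] \<rightarrow> M[i+1].\<close>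
definition seq_map :: "quiver \<Rightarrow> 'k::field rep \<Rightarrow> 'k rep \<Rightarrow> 'k rep \<Rightarrow> 'k rhom \<Rightarrow> 'k rhom \<Rightarrow> nat \<Rightarrow> 'k smor" where
  "seq_map Q M K N \<iota> p m = (if m mod 3 = 0 then SHom \<iota> else if m mod 3 = 1 then SHom p
                            else SExt (ext_cls Q N M (K, \<iota>, p)))"

definition induced :: "quiver \<Rightarrow> 'k::field rep \<Rightarrow> nat \<Rightarrow> 'k rep \<Rightarrow> 'k rep \<Rightarrow> 'k rep
     \<Rightarrow> 'k rhom \<Rightarrow> 'k rhom \<Rightarrow> nat \<Rightarrow> (nat \<Rightarrow> 'k smor) \<Rightarrow> (nat \<Rightarrow> 'k smor)" where
  "induced Q G k M K N \<iota> p m = homP_map Q G k (seq_obj M K N m) (seq_obj M K N (Suc m))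
       (seq_shift (Suc m)) (seq_map Q M K N \<iota> p m)"

end

(*
  Since Hom(G[j], X[i]) vanishes unless j = i or j = i - 1, the group Hom(P, X[i]) is
  Hom(G, X) \<oplus> Ext1(G, X) (without the second summand when i = 0). Under this identification
  the induced sequence is the Hom--Ext sequence of 0 \<rightarrow> M \<rightarrow> K \<rightarrow> N \<rightarrow> 0 for the functor
  Hom(G, -), with consecutive copies spliced by the connecting map Hom(G, N) \<rightarrow> Ext1(G, M).
  Its exactness, including the surjectivity of Ext1(G, K) \<rightarrow> Ext1(G, N) that reflects
  Ext2 = 0 for path algebras, is checked concretely: Ext1(X, Y) is the cokernel of the
  coboundary map from vertex-indexed to arrow-indexed families of matrices; an extension
  corresponds to the off-diagonal blocks of its arrow matrices in a vertexwise splitting;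
  and pushouts and pullbacks act on these families by composition.
*)

theory Submission
  imports Defs
begin

lemma assoc_mult_mat_dim:
  fixes A :: "'a::semiring_0 mat"
  shows "dim_col A = dim_row B \<Longrightarrow> dim_col B = dim_row C \<Longrightarrow> A * B * C = A * (B * C)"
  by (rule assoc_mult_mat[of A "dim_row A" "dim_col A" B "dim_col B" C "dim_col C"]) auto

lemma mult_add_distrib_mat_dim:
  fixes A :: "'a::semiring_0 mat"
  shows "dim_col A = dim_row B \<Longrightarrow> dim_row B = dim_row C \<Longrightarrow> dim_col B = dim_col C \<Longrightarrow>
    A * (B + C) = A * B + A * C"
  by (rule mult_add_distrib_mat[of A "dim_row A" "dim_col A" B "dim_col B"]) auto

lemma add_mult_distrib_mat_dim:
  fixes A :: "'a::semiring_0 mat"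
  shows "dim_row A = dim_row B \<Longrightarrow> dim_col A = dim_col B \<Longrightarrow> dim_col A = dim_row C \<Longrightarrow>
    (A + B) * C = A * C + B * C"
  by (rule add_mult_distrib_mat[of A "dim_row A" "dim_col A" B C "dim_col C"]) auto

lemma mult_minus_distrib_mat_dim:
  fixes A :: "'a::ring mat"
  shows "dim_col A = dim_row B \<Longrightarrow> dim_row B = dim_row C \<Longrightarrow> dim_col B = dim_col C \<Longrightarrow>
    A * (B - C) = A * B - A * C"
  by (rule mult_minus_distrib_mat[of A "dim_row A" "dim_col A" B "dim_col B"]) auto

lemma minus_mult_distrib_mat_dim:
  fixes A :: "'a::ring mat"
  shows "dim_row A = dim_row B \<Longrightarrow> dim_col A = dim_col B \<Longrightarrow> dim_col A = dim_row C \<Longrightarrow>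
    (A - B) * C = A * C - B * C"
  by (rule minus_mult_distrib_mat[of A "dim_row A" "dim_col A" B C "dim_col C"]) auto

lemma left_add_zero_mat_dim:
  fixes A :: "'a::monoid_add mat"
  shows "dim_row A = n \<Longrightarrow> dim_col A = m \<Longrightarrow> 0\<^sub>m n m + A = A"
  by (intro eq_matI) auto

lemma right_add_zero_mat_dim:
  fixes A :: "'a::monoid_add mat"
  shows "dim_row A = n \<Longrightarrow> dim_col A = m \<Longrightarrow> A + 0\<^sub>m n m = A"
  by (intro eq_matI) auto

lemma minus_zero_mat_dim:
  fixes A :: "'a::group_add mat"
  shows "dim_row A = n \<Longrightarrow> dim_col A = m \<Longrightarrow> A - 0\<^sub>m n m = A"
  by (intro eq_matI) auto

lemma minus_self_mat_dim:
  fixes A :: "'a::group_add mat"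
  shows "A - A = 0\<^sub>m (dim_row A) (dim_col A)"
  by (intro eq_matI) auto

lemmas mat_arith = assoc_mult_mat_dim mult_add_distrib_mat_dim add_mult_distrib_mat_dim
  mult_minus_distrib_mat_dim minus_mult_distrib_mat_dim left_add_zero_mat_dim
  right_add_zero_mat_dim minus_zero_mat_dim

lemma mult_mat_eq_assoc:
  fixes A :: "'a::semiring_0 mat"
  shows "A * B = C \<Longrightarrow> dim_col A = dim_row B \<Longrightarrow> dim_col B = dim_row Z \<Longrightarrow> A * (B * Z) = C * Z"
  by (metis assoc_mult_mat_dim)


lemma add_mat_eq_swap:
  fixes A :: "'a::ab_group_add mat"
  assumes "A \<in> carrier_mat n m" "B \<in> carrier_mat n m" "C \<in> carrier_mat n m" "D \<in> carrier_mat n m"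
    and "A + B = C + D"
  shows "D + - B = - C + A"
  using assms by (auto simp: mat_eq_iff algebra_simps)

lemma add_mat_eq_trans:
  fixes A :: "'a::ab_group_add mat"
  assumes "A \<in> carrier_mat n m" "B \<in> carrier_mat n m" "C \<in> carrier_mat n m" "D \<in> carrier_mat n m"
    "B' \<in> carrier_mat n m" "C' \<in> carrier_mat n m" "F \<in> carrier_mat n m"
    and "A + B = C + D" and "D + B' = C' + F"
  shows "A + (B + B') = (C + C') + F"
proof -
  have "A + (B + B') = (A + B) + B'" using assms(1,2,5) by simp
  also have "\<dots> = C + (D + B')" using assms(3-5,8) by simp
  also have "\<dots> = (C + C') + F" using assms(3,6,7,9) by simp
  finally show ?thesis .
qed

lemma add_diff_cancel_mat:
  fixes A :: "'a::ab_group_add mat"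
  shows "A \<in> carrier_mat n m \<Longrightarrow> C \<in> carrier_mat n m \<Longrightarrow> C + (A - C) = A"
  by (auto simp: mat_eq_iff)

lemma add_mat_eq_rearrange:
  fixes A :: "'a::ab_group_add mat"
  assumes "A \<in> carrier_mat n m" "B \<in> carrier_mat n m" "L1 \<in> carrier_mat n m" "L2 \<in> carrier_mat n m"
    "R1 \<in> carrier_mat n m" "R2 \<in> carrier_mat n m" and "R1 + R2 = L2 + L1"
  shows "A + (L1 + B) + L2 = A + R1 + B + R2"
  using assms by (auto simp: mat_eq_iff algebra_simps)


lemma eq_mat_by_mult_vec:
  fixes A B :: "'a::field mat"
  assumes "A \<in> carrier_mat n m" "B \<in> carrier_mat n m"
    and "\<And>x. x \<in> carrier_vec m \<Longrightarrow> A *\<^sub>v x = B *\<^sub>v x"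
  shows "A = B"
proof (rule eq_matI)
  fix i j assume i: "i < dim_row B" and j: "j < dim_col B"
  have "(A *\<^sub>v unit_vec m j) $ i = (B *\<^sub>v unit_vec m j) $ i" using assms(3) by simp
  moreover have "(A *\<^sub>v unit_vec m j) $ i = A $$ (i, j)" "(B *\<^sub>v unit_vec m j) $ i = B $$ (i, j)"
    using assms(1,2) i j by (auto simp: carrier_matD)
  ultimately show "A $$ (i, j) = B $$ (i, j)" by simp
qed (use assms in auto)

lemma zero_mat_mult_vec: "(v :: 'a::semiring_0 vec) \<in> carrier_vec m \<Longrightarrow> 0\<^sub>m n m *\<^sub>v v = 0\<^sub>v n"
  by (intro eq_vecI) (auto simp: scalar_prod_def)

lemma mult_mat_zero_vec: "(A :: 'a::semiring_0 mat) \<in> carrier_mat n m \<Longrightarrow> A *\<^sub>v 0\<^sub>v m = 0\<^sub>v n"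
  by (intro eq_vecI) (auto simp: scalar_prod_def)

lemma mat_factor_through:
  fixes A C :: "'a::field mat"
  assumes A: "A \<in> carrier_mat n m" and C: "C \<in> carrier_mat n k"
    and im: "\<And>z. z \<in> carrier_vec k \<Longrightarrow> \<exists>y\<in>carrier_vec m. A *\<^sub>v y = C *\<^sub>v z"
  shows "\<exists>R\<in>carrier_mat m k. A * R = C"
proof -
  define ys where "ys = map (\<lambda>j. SOME y. y \<in> carrier_vec m \<and> A *\<^sub>v y = C *\<^sub>v unit_vec k j) [0..<k]"
  have ys: "ys ! j \<in> carrier_vec m \<and> A *\<^sub>v (ys ! j) = C *\<^sub>v unit_vec k j" if j: "j < k" for j
  proof -
    have "\<exists>y. y \<in> carrier_vec m \<and> A *\<^sub>v y = C *\<^sub>v unit_vec k j" using im[of "unit_vec k j"] by auto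
    from someI_ex[OF this] show ?thesis using j unfolding ys_def by simp
  qed
  define R where "R = mat_of_cols m ys"
  have len: "length ys = k" unfolding ys_def by simp
  have R: "R \<in> carrier_mat m k" unfolding R_def using len by auto
  have "A * R = C"
  proof (rule eq_matI)
    fix i j assume i: "i < dim_row C" and j: "j < dim_col C"
    have j': "j < k" using j C by auto
    have colR: "col R j = ys ! j" unfolding R_def using j' len ys[OF j'] by (simp add: col_mat_of_cols)
    have "(A * R) $$ (i, j) = (A *\<^sub>v col R j) $ i" using i j A R C by auto
    also have "\<dots> = (C *\<^sub>v unit_vec k j) $ i" using colR ys[OF j'] by simp
    also have "\<dots> = C $$ (i, j)" using i j C by auto
    finally show "(A * R) $$ (i, j) = C $$ (i, j)" .
  qed (use A R C in auto)
  with R show ?thesis by blast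
qed

lemma mult_mat_left_cancel:
  fixes A B C :: "'a::field mat"
  assumes A: "A \<in> carrier_mat n m" and inj: "\<And>x. x \<in> carrier_vec m \<Longrightarrow> A *\<^sub>v x = 0\<^sub>v n \<Longrightarrow> x = 0\<^sub>v m"
    and B: "B \<in> carrier_mat m k" and C: "C \<in> carrier_mat m k" and eq: "A * B = A * C"
  shows "B = C"
proof (rule eq_mat_by_mult_vec[OF B C])
  fix x :: "'a vec" assume x: "x \<in> carrier_vec k"
  have Bx: "B *\<^sub>v x \<in> carrier_vec m" and Cx: "C *\<^sub>v x \<in> carrier_vec m" using B C x by auto
  have ABC: "A *\<^sub>v (B *\<^sub>v x) = A *\<^sub>v (C *\<^sub>v x)"
    using assoc_mult_mat_vec[OF A B x] assoc_mult_mat_vec[OF A C x] eq by simp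
  have "A *\<^sub>v (B *\<^sub>v x - C *\<^sub>v x) = A *\<^sub>v (B *\<^sub>v x) - A *\<^sub>v (C *\<^sub>v x)"
    by (rule mult_minus_distrib_mat_vec[OF A Bx Cx])
  also have "\<dots> = 0\<^sub>v n" unfolding ABC using A Cx by simp
  finally have diff: "B *\<^sub>v x - C *\<^sub>v x = 0\<^sub>v m" using inj Bx Cx by simp
  show "B *\<^sub>v x = C *\<^sub>v x"
  proof (rule eq_vecI)
    fix i assume "i < dim_vec (C *\<^sub>v x)"
    then have "(B *\<^sub>v x - C *\<^sub>v x) $ i = 0" using diff C by simp
    then show "(B *\<^sub>v x) $ i = (C *\<^sub>v x) $ i" using \<open>i < dim_vec (C *\<^sub>v x)\<close> Bx Cx by simp
  qed (use B C in simp)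
qed

definition mat_splitting :: "'a::semiring_1 mat \<Rightarrow> 'a mat \<Rightarrow> 'a mat \<Rightarrow> 'a mat \<Rightarrow> nat \<Rightarrow> nat \<Rightarrow> nat \<Rightarrow> bool"
  where "mat_splitting \<alpha> \<beta> s r y e x \<longleftrightarrow> \<alpha> \<in> carrier_mat e y \<and> \<beta> \<in> carrier_mat x e \<and>
    s \<in> carrier_mat e x \<and> r \<in> carrier_mat y e \<and>
    \<beta> * s = 1\<^sub>m x \<and> r * \<alpha> = 1\<^sub>m y \<and> \<alpha> * r + s * \<beta> = 1\<^sub>m e \<and> r * s = 0\<^sub>m y x \<and> \<beta> * \<alpha> = 0\<^sub>m x y"

lemma short_exact_mat_comp_zero:
  fixes \<alpha> \<beta> :: "'a::field mat"
  assumes a: "\<alpha> \<in> carrier_mat e y" and b: "\<beta> \<in> carrier_mat x e"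
    and exact: "\<forall>w\<in>carrier_vec e. \<beta> *\<^sub>v w = 0\<^sub>v x \<longleftrightarrow> (\<exists>v\<in>carrier_vec y. \<alpha> *\<^sub>v v = w)"
  shows "\<beta> * \<alpha> = 0\<^sub>m x y"
proof (rule eq_mat_by_mult_vec[of _ x y])
  fix v :: "'a vec" assume v: "v \<in> carrier_vec y"
  have "(\<beta> * \<alpha>) *\<^sub>v v = \<beta> *\<^sub>v (\<alpha> *\<^sub>v v)" using assoc_mult_mat_vec[OF b a v] .
  also have "\<dots> = 0\<^sub>v x" using exact a v by auto
  finally show "(\<beta> * \<alpha>) *\<^sub>v v = 0\<^sub>m x y *\<^sub>v v" using v by (simp add: zero_mat_mult_vec)
qed (use a b in simp_all)

lemma short_exact_mat_splitting:
  fixes \<alpha> \<beta> :: "'a::field mat"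
  assumes a: "\<alpha> \<in> carrier_mat e y" and b: "\<beta> \<in> carrier_mat x e"
    and inj: "\<forall>v\<in>carrier_vec y. \<alpha> *\<^sub>v v = 0\<^sub>v e \<longrightarrow> v = 0\<^sub>v y"
    and surj: "\<forall>z\<in>carrier_vec x. \<exists>w\<in>carrier_vec e. \<beta> *\<^sub>v w = z"
    and exact: "\<forall>w\<in>carrier_vec e. \<beta> *\<^sub>v w = 0\<^sub>v x \<longleftrightarrow> (\<exists>v\<in>carrier_vec y. \<alpha> *\<^sub>v v = w)"
  shows "\<exists>s r. mat_splitting \<alpha> \<beta> s r y e x"
proof -
  note [simp] = carrier_matD[OF a] carrier_matD[OF b]
  have ba: "\<beta> * \<alpha> = 0\<^sub>m x y" by (rule short_exact_mat_comp_zero[OF a b exact])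
  obtain s where s: "s \<in> carrier_mat e x" and bs: "\<beta> * s = 1\<^sub>m x"
    using mat_factor_through[OF b one_carrier_mat] surj by fastforce
  note [simp] = carrier_matD[OF s]
  have C: "1\<^sub>m e - s * \<beta> \<in> carrier_mat e e" using s b by (simp add: minus_carrier_mat)
  have "\<exists>r\<in>carrier_mat y e. \<alpha> * r = 1\<^sub>m e - s * \<beta>"
  proof (rule mat_factor_through[OF a C])
    fix z :: "'a vec" assume z: "z \<in> carrier_vec e"
    have "\<beta> * (1\<^sub>m e - s * \<beta>) = \<beta> - (\<beta> * s) * \<beta>" by (simp add: mat_arith)
    also have "\<dots> = 0\<^sub>m x e" using bs by (simp add: minus_self_mat_dim)
    finally have "\<beta> *\<^sub>v ((1\<^sub>m e - s * \<beta>) *\<^sub>v z) = 0\<^sub>v x"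
      using assoc_mult_mat_vec[OF b C z] z by (simp add: zero_mat_mult_vec)
    with exact C z show "\<exists>v\<in>carrier_vec y. \<alpha> *\<^sub>v v = (1\<^sub>m e - s * \<beta>) *\<^sub>v z" by auto
  qed
  then obtain r where r: "r \<in> carrier_mat y e" and ar: "\<alpha> * r = 1\<^sub>m e - s * \<beta>" by blast
  note [simp] = carrier_matD[OF r]
  have cancel: "\<And>v. v \<in> carrier_vec y \<Longrightarrow> \<alpha> *\<^sub>v v = 0\<^sub>v e \<Longrightarrow> v = 0\<^sub>v y" using inj by blast
  have ra: "r * \<alpha> = 1\<^sub>m y"
  proof (rule mult_mat_left_cancel[OF a cancel, where k = y])
    have "\<alpha> * (r * \<alpha>) = (\<alpha> * r) * \<alpha>" by (simp add: mat_arith)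
    also have "\<dots> = \<alpha> - s * (\<beta> * \<alpha>)" unfolding ar by (simp add: mat_arith)
    finally show "\<alpha> * (r * \<alpha>) = \<alpha> * 1\<^sub>m y" using ba by (simp add: mat_arith)
  qed (use r a in simp_all)
  have rs: "r * s = 0\<^sub>m y x"
  proof (rule mult_mat_left_cancel[OF a cancel, where k = x])
    have "\<alpha> * (r * s) = (\<alpha> * r) * s" by (simp add: mat_arith)
    also have "\<dots> = s - s * (\<beta> * s)" unfolding ar by (simp add: mat_arith)
    finally show "\<alpha> * (r * s) = \<alpha> * 0\<^sub>m y x" using bs by (simp add: mat_arith minus_self_mat_dim)
  qed (use r s in simp_all)
  have "\<alpha> * r + s * \<beta> = 1\<^sub>m e" unfolding ar by (auto simp: mat_eq_iff)
  with a b s r bs ra rs ba show ?thesis unfolding mat_splitting_def by blast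
qed


lemma mat_splitting_short_exact:
  fixes \<alpha> \<beta> :: "'a::field mat"
  assumes "mat_splitting \<alpha> \<beta> s r y e x"
  shows "(\<forall>v\<in>carrier_vec y. \<alpha> *\<^sub>v v = 0\<^sub>v e \<longrightarrow> v = 0\<^sub>v y) \<and>
    (\<forall>z\<in>carrier_vec x. \<exists>w\<in>carrier_vec e. \<beta> *\<^sub>v w = z) \<and>
    (\<forall>w\<in>carrier_vec e. \<beta> *\<^sub>v w = 0\<^sub>v x \<longleftrightarrow> (\<exists>v\<in>carrier_vec y. \<alpha> *\<^sub>v v = w))"
proof (intro conjI)
  have a: "\<alpha> \<in> carrier_mat e y" and b: "\<beta> \<in> carrier_mat x e"
    and s: "s \<in> carrier_mat e x" and r: "r \<in> carrier_mat y e" and bs: "\<beta> * s = 1\<^sub>m x"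
    and ra: "r * \<alpha> = 1\<^sub>m y" and id: "\<alpha> * r + s * \<beta> = 1\<^sub>m e" and ba: "\<beta> * \<alpha> = 0\<^sub>m x y"
    using assms(1) unfolding mat_splitting_def by auto
  show "\<forall>v\<in>carrier_vec y. \<alpha> *\<^sub>v v = 0\<^sub>v e \<longrightarrow> v = 0\<^sub>v y"
  proof (intro ballI impI)
    fix v :: "'a vec" assume v: "v \<in> carrier_vec y" and "\<alpha> *\<^sub>v v = 0\<^sub>v e"
    then have "(r * \<alpha>) *\<^sub>v v = 0\<^sub>v y" using assoc_mult_mat_vec[OF r a v] r by (simp add: mult_mat_zero_vec)
    then show "v = 0\<^sub>v y" using ra v by simp
  qed
  show "\<forall>z\<in>carrier_vec x. \<exists>w\<in>carrier_vec e. \<beta> *\<^sub>v w = z"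
  proof
    fix z :: "'a vec" assume z: "z \<in> carrier_vec x"
    have "\<beta> *\<^sub>v (s *\<^sub>v z) = z" using assoc_mult_mat_vec[OF b s z] bs z by simp
    then show "\<exists>w\<in>carrier_vec e. \<beta> *\<^sub>v w = z" using s z by (intro bexI[of _ "s *\<^sub>v z"]) auto
  qed
  show "\<forall>w\<in>carrier_vec e. \<beta> *\<^sub>v w = 0\<^sub>v x \<longleftrightarrow> (\<exists>v\<in>carrier_vec y. \<alpha> *\<^sub>v v = w)"
  proof (intro ballI iffI)
    fix w :: "'a vec" assume w: "w \<in> carrier_vec e" and bw: "\<beta> *\<^sub>v w = 0\<^sub>v x"
    have "w = (\<alpha> * r + s * \<beta>) *\<^sub>v w" using id w by simp
    also have "\<dots> = \<alpha> *\<^sub>v (r *\<^sub>v w) + s *\<^sub>v (\<beta> *\<^sub>v w)"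
      using a r s b w by (simp add: add_mult_distrib_mat_vec[of _ e e])
    also have "\<dots> = \<alpha> *\<^sub>v (r *\<^sub>v w)" using bw s a r w by (simp add: mult_mat_zero_vec)
    finally show "\<exists>v\<in>carrier_vec y. \<alpha> *\<^sub>v v = w" using r w by (intro bexI[of _ "r *\<^sub>v w"]) auto
  next
    fix w :: "'a vec" assume "\<exists>v\<in>carrier_vec y. \<alpha> *\<^sub>v v = w"
    then obtain v where v: "v \<in> carrier_vec y" and w: "\<alpha> *\<^sub>v v = w" by blast
    show "\<beta> *\<^sub>v w = 0\<^sub>v x" using assoc_mult_mat_vec[OF b a v] ba v w by (simp add: zero_mat_mult_vec)
  qed
qed


definition wf_quiver :: "quiver \<Rightarrow> bool" where
  "wf_quiver Q \<longleftrightarrow> (\<forall>a<length (arr Q). src Q a < nv Q \<and> tgt Q a < nv Q)"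

lemma dynkin_imp_wf_quiver: "dynkin Q \<Longrightarrow> wf_quiver Q"
  unfolding dynkin_def wf_quiver_def src_def tgt_def
  by (metis (no_types, lifting) case_prodD nth_mem prod.collapse)

lemma wf_quiverD:
  "wf_quiver Q \<Longrightarrow> a < length (arr Q) \<Longrightarrow> src Q a < nv Q"
  "wf_quiver Q \<Longrightarrow> a < length (arr Q) \<Longrightarrow> tgt Q a < nv Q"
  unfolding wf_quiver_def by auto

lemma valid_rep_dims: "valid_rep Q X \<Longrightarrow> a < length (arr Q) \<Longrightarrow>
    dim_row (rmat X a) = rdim X (tgt Q a) \<and> dim_col (rmat X a) = rdim X (src Q a)"
  unfolding valid_rep_def by auto

lemma valid_rep_dsum_list: "\<forall>R\<in>set Rs. valid_rep Q R \<Longrightarrow> valid_rep Q (dsum_list Q Rs)"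
  unfolding dsum_list_def
  by (induction Rs) (auto simp: valid_rep_def zero_rep_def dsum_def intro!: four_block_carrier_mat)

lemma basic_generator_valid_rep: "is_basic_generator Q G \<Longrightarrow> valid_rep Q G"
  unfolding is_basic_generator_def indec_def using valid_rep_dsum_list by blast

lemma hom_dims: "f \<in> hom Q X Y \<Longrightarrow> v < nv Q \<Longrightarrow> dim_row (f v) = rdim Y v \<and> dim_col (f v) = rdim X v"
  unfolding hom_def by auto

lemma hom_comm: "f \<in> hom Q X Y \<Longrightarrow> a < length (arr Q) \<Longrightarrow>
    rmat Y a * f (src Q a) = f (tgt Q a) * rmat X a"
  unfolding hom_def by auto

lemma hom_outside: "f \<in> hom Q X Y \<Longrightarrow> \<not> v < nv Q \<Longrightarrow> f v = 0\<^sub>m 0 0"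
  unfolding hom_def by auto

lemma homI:
  assumes "\<And>v. v < nv Q \<Longrightarrow> f v \<in> carrier_mat (rdim Y v) (rdim X v)"
    and "\<And>v. \<not> v < nv Q \<Longrightarrow> f v = 0\<^sub>m 0 0"
    and "\<And>a. a < length (arr Q) \<Longrightarrow> rmat Y a * f (src Q a) = f (tgt Q a) * rmat X a"
  shows "f \<in> hom Q X Y"
  using assms unfolding hom_def by auto

lemma comp_apply: "v < nv Q \<Longrightarrow> comp Q f g v = f v * g v"
  unfolding comp_def by simp

lemma comp_eq_iff: "comp Q f g = comp Q f' g' \<longleftrightarrow> (\<forall>v<nv Q. f v * g v = f' v * g' v)"
  unfolding comp_def by (auto simp: fun_eq_iff)

lemma idh_apply: "v < nv Q \<Longrightarrow> idh Q X v = 1\<^sub>m (rdim X v)"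
  unfolding idh_def by simp

lemma zeroh_apply: "v < nv Q \<Longrightarrow> zeroh Q X Y v = 0\<^sub>m (rdim Y v) (rdim X v)"
  unfolding zeroh_def by simp

lemma idh_hom: "wf_quiver Q \<Longrightarrow> valid_rep Q X \<Longrightarrow> idh Q X \<in> hom Q X X"
  by (rule homI) (auto simp: idh_def wf_quiverD valid_rep_dims)

lemma comp_zeroh: "g \<in> hom Q X Y \<Longrightarrow> comp Q g (zeroh Q G X) = zeroh Q G Y"
  by (auto simp: comp_def zeroh_def fun_eq_iff hom_dims)

lemma hom_comm_mult:
  assumes wf: "wf_quiver Q" and X: "valid_rep Q X" and Y: "valid_rep Q Y" and f: "f \<in> hom Q X Y"
    and a: "a < length (arr Q)" and Z: "dim_row Z = rdim X (src Q a)"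
  shows "rmat Y a * (f (src Q a) * Z) = f (tgt Q a) * (rmat X a * Z)"
proof -
  note [simp] = wf_quiverD[OF wf a] hom_dims[OF f] valid_rep_dims[OF X a] valid_rep_dims[OF Y a]
  have "rmat Y a * (f (src Q a) * Z) = (rmat Y a * f (src Q a)) * Z" using Z by (simp add: mat_arith)
  also have "\<dots> = f (tgt Q a) * (rmat X a * Z)" using Z by (simp add: hom_comm[OF f a] mat_arith)
  finally show ?thesis .
qed


section \<open>Cocycles and cohomology\<close>

definition cochain :: "quiver \<Rightarrow> 'k rep \<Rightarrow> 'k rep \<Rightarrow> 'k rhom \<Rightarrow> bool" where
  "cochain Q X Y w \<longleftrightarrow> (\<forall>v<nv Q. w v \<in> carrier_mat (rdim Y v) (rdim X v))"

text \<open>A path algebra has no relations, so every arrow-indexed family of matrices is a 1-cocycle,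
  and \<open>Ext\<^sup>1(X, Y)\<close> is the cokernel of the coboundary map from vertex-indexed families.\<close>

definition cocycle :: "quiver \<Rightarrow> 'k rep \<Rightarrow> 'k rep \<Rightarrow> (nat \<Rightarrow> 'k mat) \<Rightarrow> bool" where
  "cocycle Q X Y h \<longleftrightarrow> (\<forall>a<length (arr Q). h a \<in> carrier_mat (rdim Y (tgt Q a)) (rdim X (src Q a)))"

definition cohomologous :: "quiver \<Rightarrow> 'k::field rep \<Rightarrow> 'k rep \<Rightarrow> (nat \<Rightarrow> 'k mat) \<Rightarrow> (nat \<Rightarrow> 'k mat)
    \<Rightarrow> bool" where
  "cohomologous Q X Y h h' \<longleftrightarrow> cocycle Q X Y h \<and> cocycle Q X Y h' \<and> (\<exists>w. cochain Q X Y w \<and>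
     (\<forall>a<length (arr Q). h a + w (tgt Q a) * rmat X a = rmat Y a * w (src Q a) + h' a))"

definition zero_cocycle :: "quiver \<Rightarrow> 'k::field rep \<Rightarrow> 'k rep \<Rightarrow> nat \<Rightarrow> 'k mat" where
  "zero_cocycle Q X Y = (\<lambda>a. 0\<^sub>m (rdim Y (tgt Q a)) (rdim X (src Q a)))"

lemma cohomologousI:
  assumes "cocycle Q X Y h" "cocycle Q X Y h'" "cochain Q X Y w"
    and "\<And>a. a < length (arr Q) \<Longrightarrow> h a + w (tgt Q a) * rmat X a = rmat Y a * w (src Q a) + h' a"
  shows "cohomologous Q X Y h h'"
  using assms unfolding cohomologous_def by blast

lemma cochain_dims:
  "cochain Q X Y w \<Longrightarrow> v < nv Q \<Longrightarrow> dim_row (w v) = rdim Y v"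
  "cochain Q X Y w \<Longrightarrow> v < nv Q \<Longrightarrow> dim_col (w v) = rdim X v"
  unfolding cochain_def by auto

lemma cocycle_dims:
  "cocycle Q X Y h \<Longrightarrow> a < length (arr Q) \<Longrightarrow> dim_row (h a) = rdim Y (tgt Q a)"
  "cocycle Q X Y h \<Longrightarrow> a < length (arr Q) \<Longrightarrow> dim_col (h a) = rdim X (src Q a)"
  unfolding cocycle_def by auto

lemma cocycle_mult_left:
  "wf_quiver Q \<Longrightarrow> cocycle Q X Y h \<Longrightarrow> g \<in> hom Q Y Y' \<Longrightarrow> cocycle Q X Y' (\<lambda>a. g (tgt Q a) * h a)"
  unfolding cocycle_def by (auto intro!: carrier_matI simp: wf_quiverD hom_dims)

lemma cocycle_mult_right:
  "wf_quiver Q \<Longrightarrow> cocycle Q X Y h \<Longrightarrow> f \<in> hom Q X' X \<Longrightarrow> cocycle Q X' Y (\<lambda>a. h a * f (src Q a))"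
  unfolding cocycle_def by (auto intro!: carrier_matI simp: wf_quiverD hom_dims)

lemma cocycle_zero_cocycle: "cocycle Q X Y (zero_cocycle Q X Y)"
  unfolding cocycle_def zero_cocycle_def by simp

lemma cohomologous_cong:
  assumes "\<And>a. a < length (arr Q) \<Longrightarrow> h a = h' a" "\<And>a. a < length (arr Q) \<Longrightarrow> k a = k' a"
  shows "cohomologous Q X Y h k = cohomologous Q X Y h' k'"
  using assms unfolding cohomologous_def cocycle_def by auto

context
  fixes Q :: quiver and X Y :: "'k::field rep"
  assumes wf: "wf_quiver Q" and X: "valid_rep Q X" and Y: "valid_rep Q Y"
begin

lemmas rep_dims = wf_quiverD[OF wf] valid_rep_dims[OF X] valid_rep_dims[OF Y]

lemma cohomologous_refl: "cocycle Q X Y h \<Longrightarrow> cohomologous Q X Y h h"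
  by (rule cohomologousI[where w = "\<lambda>v. 0\<^sub>m (rdim Y v) (rdim X v)"])
    (auto simp: cochain_def mat_arith rep_dims cocycle_dims)

lemma cohomologous_sym:
  assumes "cohomologous Q X Y h h'"
  shows "cohomologous Q X Y h' h"
proof -
  obtain w where h: "cocycle Q X Y h" and h': "cocycle Q X Y h'" and w: "cochain Q X Y w"
    and eq: "\<And>a. a < length (arr Q) \<Longrightarrow> h a + w (tgt Q a) * rmat X a = rmat Y a * w (src Q a) + h' a"
    using assms unfolding cohomologous_def by blast
  show ?thesis
  proof (rule cohomologousI[OF h' h])
    show "cochain Q X Y (\<lambda>v. - w v)" using w unfolding cochain_def by simp
    fix a assume a: "a < length (arr Q)"
    note [simp] = a rep_dims cocycle_dims[OF h] cocycle_dims[OF h'] cochain_dims[OF w]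
    have "h' a + - (w (tgt Q a) * rmat X a) = - (rmat Y a * w (src Q a)) + h a"
      by (rule add_mat_eq_swap[OF _ _ _ _ eq[OF a]]; rule carrier_matI; simp)
    then show "h' a + - w (tgt Q a) * rmat X a = rmat Y a * - w (src Q a) + h a" by simp
  qed
qed

lemma cohomologous_trans:
  assumes "cohomologous Q X Y h h'" and "cohomologous Q X Y h' h''"
  shows "cohomologous Q X Y h h''"
proof -
  obtain w where h: "cocycle Q X Y h" and h': "cocycle Q X Y h'" and w: "cochain Q X Y w"
    and eq: "\<And>a. a < length (arr Q) \<Longrightarrow> h a + w (tgt Q a) * rmat X a = rmat Y a * w (src Q a) + h' a"
    using assms(1) unfolding cohomologous_def by blast
  obtain w' where h'': "cocycle Q X Y h''" and w': "cochain Q X Y w'"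
    and eq': "\<And>a. a < length (arr Q) \<Longrightarrow> h' a + w' (tgt Q a) * rmat X a = rmat Y a * w' (src Q a) + h'' a"
    using assms(2) unfolding cohomologous_def by blast
  show ?thesis
  proof (rule cohomologousI[OF h h''])
    show "cochain Q X Y (\<lambda>v. w v + w' v)" using w w' unfolding cochain_def by simp
    fix a assume a: "a < length (arr Q)"
    note [simp] = a rep_dims cocycle_dims[OF h] cocycle_dims[OF h'] cocycle_dims[OF h'']
      cochain_dims[OF w] cochain_dims[OF w']
    have "h a + (w (tgt Q a) * rmat X a + w' (tgt Q a) * rmat X a) =
        (rmat Y a * w (src Q a) + rmat Y a * w' (src Q a)) + h'' a"
      by (rule add_mat_eq_trans[OF _ _ _ _ _ _ _ eq[OF a] eq'[OF a]]; rule carrier_matI; simp)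
    then show "h a + (w (tgt Q a) + w' (tgt Q a)) * rmat X a =
        rmat Y a * (w (src Q a) + w' (src Q a)) + h'' a"
      by (simp add: mat_arith)
  qed
qed

end

lemma cohomologous_mult_left:
  assumes wf: "wf_quiver Q" and X: "valid_rep Q X" and Y: "valid_rep Q Y" and Y': "valid_rep Q Y'"
    and g: "g \<in> hom Q Y Y'" and "cohomologous Q X Y h h'"
  shows "cohomologous Q X Y' (\<lambda>a. g (tgt Q a) * h a) (\<lambda>a. g (tgt Q a) * h' a)"
proof -
  obtain w where h: "cocycle Q X Y h" and h': "cocycle Q X Y h'" and w: "cochain Q X Y w"
    and eq: "\<And>a. a < length (arr Q) \<Longrightarrow> h a + w (tgt Q a) * rmat X a = rmat Y a * w (src Q a) + h' a"
    using assms(6) unfolding cohomologous_def by blast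
  show ?thesis
  proof (rule cohomologousI[OF cocycle_mult_left[OF wf h g] cocycle_mult_left[OF wf h' g]])
    show "cochain Q X Y' (\<lambda>v. g v * w v)"
      using w g unfolding cochain_def by (auto intro!: carrier_matI simp: cochain_dims hom_dims)
    fix a assume a: "a < length (arr Q)"
    note [simp] = a wf_quiverD[OF wf] valid_rep_dims[OF X] valid_rep_dims[OF Y] valid_rep_dims[OF Y']
      cocycle_dims[OF h] cocycle_dims[OF h'] cochain_dims[OF w] hom_dims[OF g]
    have "g (tgt Q a) * (h a + w (tgt Q a) * rmat X a) = g (tgt Q a) * (rmat Y a * w (src Q a) + h' a)"
      by (simp add: eq[OF a])
    then show "g (tgt Q a) * h a + g (tgt Q a) * w (tgt Q a) * rmat X a =
        rmat Y' a * (g (src Q a) * w (src Q a)) + g (tgt Q a) * h' a"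
      by (simp add: mat_arith hom_comm_mult[OF wf Y Y' g])
  qed
qed

lemma cohomologous_mult_right:
  assumes wf: "wf_quiver Q" and X: "valid_rep Q X" and Y: "valid_rep Q Y" and X': "valid_rep Q X'"
    and f: "f \<in> hom Q X' X" and "cohomologous Q X Y h h'"
  shows "cohomologous Q X' Y (\<lambda>a. h a * f (src Q a)) (\<lambda>a. h' a * f (src Q a))"
proof -
  obtain w where h: "cocycle Q X Y h" and h': "cocycle Q X Y h'" and w: "cochain Q X Y w"
    and eq: "\<And>a. a < length (arr Q) \<Longrightarrow> h a + w (tgt Q a) * rmat X a = rmat Y a * w (src Q a) + h' a"
    using assms(6) unfolding cohomologous_def by blast
  show ?thesis
  proof (rule cohomologousI[OF cocycle_mult_right[OF wf h f] cocycle_mult_right[OF wf h' f]])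
    show "cochain Q X' Y (\<lambda>v. w v * f v)"
      using w f unfolding cochain_def by (auto intro!: carrier_matI simp: cochain_dims hom_dims)
    fix a assume a: "a < length (arr Q)"
    note [simp] = a wf_quiverD[OF wf] valid_rep_dims[OF X] valid_rep_dims[OF Y] valid_rep_dims[OF X']
      cocycle_dims[OF h] cocycle_dims[OF h'] cochain_dims[OF w] hom_dims[OF f]
    have "(h a + w (tgt Q a) * rmat X a) * f (src Q a) = (rmat Y a * w (src Q a) + h' a) * f (src Q a)"
      by (simp add: eq[OF a])
    then show "h a * f (src Q a) + w (tgt Q a) * f (tgt Q a) * rmat X' a =
        rmat Y a * (w (src Q a) * f (src Q a)) + h' a * f (src Q a)"
      by (simp add: mat_arith hom_comm[OF f a])
  qed
qed


definition splitting :: "quiver \<Rightarrow> 'k::field rep \<Rightarrow> 'k rep \<Rightarrow> 'k rep \<Rightarrow> 'k rhom \<Rightarrow> 'k rhom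
    \<Rightarrow> 'k rhom \<Rightarrow> 'k rhom \<Rightarrow> bool" where
  "splitting Q Y E X \<alpha> \<beta> s r \<longleftrightarrow>
    (\<forall>v<nv Q. mat_splitting (\<alpha> v) (\<beta> v) (s v) (r v) (rdim Y v) (rdim E v) (rdim X v))"

lemma ses_has_splitting:
  assumes "ses Q Y E X \<alpha> \<beta>"
  shows "\<exists>s r. splitting Q Y E X \<alpha> \<beta> s r"
proof -
  have "\<exists>sr. v < nv Q \<longrightarrow>
      mat_splitting (\<alpha> v) (\<beta> v) (fst sr) (snd sr) (rdim Y v) (rdim E v) (rdim X v)" for v
  proof (cases "v < nv Q")
    case True
    with assms have "\<alpha> v \<in> carrier_mat (rdim E v) (rdim Y v)" "\<beta> v \<in> carrier_mat (rdim X v) (rdim E v)"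
      unfolding ses_def hom_def by auto
    from short_exact_mat_splitting[OF this] assms True show ?thesis
      unfolding ses_def by fastforce
  qed simp
  then obtain F where "\<And>v. v < nv Q \<Longrightarrow>
      mat_splitting (\<alpha> v) (\<beta> v) (fst (F v)) (snd (F v)) (rdim Y v) (rdim E v) (rdim X v)"
    by metis
  then have "splitting Q Y E X \<alpha> \<beta> (\<lambda>v. fst (F v)) (\<lambda>v. snd (F v))"
    unfolding splitting_def by blast
  then show ?thesis by blast
qed

lemma ses_dims:
  assumes "ses Q Y E X \<alpha> \<beta>" "v < nv Q"
  shows "dim_row (\<alpha> v) = rdim E v" "dim_col (\<alpha> v) = rdim Y v"
    "dim_row (\<beta> v) = rdim X v" "dim_col (\<beta> v) = rdim E v"
  using assms unfolding ses_def hom_def by auto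

lemma splitting_dims:
  assumes "splitting Q Y E X \<alpha> \<beta> s r" "v < nv Q"
  shows "dim_row (s v) = rdim E v" "dim_col (s v) = rdim X v"
    "dim_row (r v) = rdim Y v" "dim_col (r v) = rdim E v"
  using assms unfolding splitting_def mat_splitting_def by auto

lemma splitting_eqs:
  assumes "splitting Q Y E X \<alpha> \<beta> s r" "v < nv Q"
  shows "\<beta> v * s v = 1\<^sub>m (rdim X v)" "r v * \<alpha> v = 1\<^sub>m (rdim Y v)"
    "\<alpha> v * r v + s v * \<beta> v = 1\<^sub>m (rdim E v)" "r v * s v = 0\<^sub>m (rdim Y v) (rdim X v)"
    "\<beta> v * \<alpha> v = 0\<^sub>m (rdim X v) (rdim Y v)"
  using assms unfolding splitting_def mat_splitting_def by auto

lemma splitting_eqs_mult: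
  assumes sp: "splitting Q Y E X \<alpha> \<beta> s r" and ses: "ses Q Y E X \<alpha> \<beta>" and v: "v < nv Q"
  shows "dim_row Z = rdim X v \<Longrightarrow> \<beta> v * (s v * Z) = Z"
    "dim_row Z = rdim Y v \<Longrightarrow> r v * (\<alpha> v * Z) = Z"
    "dim_row Z = rdim X v \<Longrightarrow> r v * (s v * Z) = 0\<^sub>m (rdim Y v) (dim_col Z)"
    "dim_row Z = rdim Y v \<Longrightarrow> \<beta> v * (\<alpha> v * Z) = 0\<^sub>m (rdim X v) (dim_col Z)"
  using mult_mat_eq_assoc[OF splitting_eqs(1)[OF sp v], of Z]
    mult_mat_eq_assoc[OF splitting_eqs(2)[OF sp v], of Z]
    mult_mat_eq_assoc[OF splitting_eqs(4)[OF sp v], of Z]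
    mult_mat_eq_assoc[OF splitting_eqs(5)[OF sp v], of Z]
  by (simp_all add: splitting_dims[OF sp v] ses_dims[OF ses v])

text \<open>In the decomposition \<open>E v = \<alpha> v (Y v) \<oplus> s v (X v)\<close> given by a splitting, arrow \<open>a\<close>
  acts on \<open>E\<close> by the block matrix \<open>[[rmat Y a, split_cocycle Q E s r a], [0, rmat X a]]\<close>.\<close>

definition split_cocycle :: "quiver \<Rightarrow> 'k::field rep \<Rightarrow> 'k rhom \<Rightarrow> 'k rhom \<Rightarrow> nat \<Rightarrow> 'k mat" where
  "split_cocycle Q E s r a = r (tgt Q a) * rmat E a * s (src Q a)"

locale split_ses =
  fixes Q :: quiver and Y E X :: "'k::field rep" and \<alpha> \<beta> s r :: "'k rhom"
  assumes wf: "wf_quiver Q" and ses: "ses Q Y E X \<alpha> \<beta>" and spl: "splitting Q Y E X \<alpha> \<beta> s r"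
begin

lemma valid_Y: "valid_rep Q Y" and valid_E: "valid_rep Q E" and valid_X: "valid_rep Q X"
  and hom_\<alpha>: "\<alpha> \<in> hom Q Y E" and hom_\<beta>: "\<beta> \<in> hom Q E X"
  using ses unfolding ses_def by auto

lemmas dims = wf_quiverD[OF wf] ses_dims[OF ses] splitting_dims[OF spl] valid_rep_dims[OF valid_Y]
  valid_rep_dims[OF valid_E] valid_rep_dims[OF valid_X]

lemma split_cocycle_dims:
  "a < length (arr Q) \<Longrightarrow> dim_row (split_cocycle Q E s r a) = rdim Y (tgt Q a)"
  "a < length (arr Q) \<Longrightarrow> dim_col (split_cocycle Q E s r a) = rdim X (src Q a)"
  unfolding split_cocycle_def by (simp_all add: dims)

lemma split_cocycle_cocycle: "cocycle Q X Y (split_cocycle Q E s r)"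
  unfolding cocycle_def by (auto intro!: carrier_matI simp: split_cocycle_dims)

lemma retraction_rmat:
  assumes a: "a < length (arr Q)"
  shows "r (tgt Q a) * rmat E a = rmat Y a * r (src Q a) + split_cocycle Q E s r a * \<beta> (src Q a)"
proof -
  note [simp] = dims a
  have "r (tgt Q a) * rmat E a =
      r (tgt Q a) * rmat E a * (\<alpha> (src Q a) * r (src Q a) + s (src Q a) * \<beta> (src Q a))"
    by (simp add: splitting_eqs[OF spl])
  also have "\<dots> = rmat Y a * r (src Q a) + split_cocycle Q E s r a * \<beta> (src Q a)"
    by (simp add: mat_arith split_cocycle_def hom_comm_mult[OF wf valid_Y valid_E hom_\<alpha> a]
        splitting_eqs_mult[OF spl ses])
  finally show ?thesis .
qed

lemma rmat_section:
  assumes a: "a < length (arr Q)"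
  shows "rmat E a * s (src Q a) = \<alpha> (tgt Q a) * split_cocycle Q E s r a + s (tgt Q a) * rmat X a"
proof -
  note [simp] = dims a
  have "rmat E a * s (src Q a) =
      (\<alpha> (tgt Q a) * r (tgt Q a) + s (tgt Q a) * \<beta> (tgt Q a)) * rmat E a * s (src Q a)"
    by (simp add: splitting_eqs[OF spl])
  also have "\<dots> = \<alpha> (tgt Q a) * split_cocycle Q E s r a + s (tgt Q a) * rmat X a"
    by (simp add: mat_arith split_cocycle_def hom_comm_mult[OF wf valid_E valid_X hom_\<beta> a, symmetric]
        splitting_eqs_mult[OF spl ses] splitting_eqs(1)[OF spl])
  finally show ?thesis .
qed

lemma retraction_rmat_mult:
  assumes a: "a < length (arr Q)" and Z: "dim_row Z = rdim E (src Q a)"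
  shows "r (tgt Q a) * (rmat E a * Z) =
    rmat Y a * (r (src Q a) * Z) + split_cocycle Q E s r a * (\<beta> (src Q a) * Z)"
  using arg_cong[OF retraction_rmat[OF a], of "\<lambda>A. A * Z"] a Z
  by (simp add: dims split_cocycle_dims mat_arith)

lemma rmat_section_mult:
  assumes a: "a < length (arr Q)" and Z: "dim_row Z = rdim X (src Q a)"
  shows "rmat E a * (s (src Q a) * Z) =
    \<alpha> (tgt Q a) * (split_cocycle Q E s r a * Z) + s (tgt Q a) * (rmat X a * Z)"
  using arg_cong[OF rmat_section[OF a], of "\<lambda>A. A * Z"] a Z
  by (simp add: dims split_cocycle_dims mat_arith)

end


text \<open>The map \<open>E \<rightarrow> E'\<close> that is \<open>a\<close> on the \<open>Y\<close>-part, \<open>b\<close> on the \<open>X\<close>-part, and \<open>w\<close> from the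
  \<open>X\<close>-part to the \<open>Y'\<close>-part, in the decompositions given by splittings \<open>(s, r)\<close>, \<open>(s', r')\<close>.\<close>

definition glued_map :: "quiver \<Rightarrow> 'k::field rhom \<Rightarrow> 'k rhom \<Rightarrow> 'k rhom \<Rightarrow> 'k rhom \<Rightarrow> 'k rhom
    \<Rightarrow> 'k rhom \<Rightarrow> 'k rhom \<Rightarrow> 'k rhom" where
  "glued_map Q \<alpha>' a r s' b \<beta> w = (\<lambda>v. if v < nv Q
     then \<alpha>' v * a v * r v + s' v * b v * \<beta> v + \<alpha>' v * w v * \<beta> v else 0\<^sub>m 0 0)"

locale split_ses_pair =
  e: split_ses Q Y E X \<alpha> \<beta> s r + e': split_ses Q Y' E' X' \<alpha>' \<beta>' s' r'
  for Q :: quiver and Y E X :: "'k::field rep" and \<alpha> \<beta> s r :: "'k rhom"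
    and Y' E' X' :: "'k rep" and \<alpha>' \<beta>' s' r' :: "'k rhom"
begin

abbreviation "\<kappa> \<equiv> split_cocycle Q E s r"
abbreviation "\<kappa>' \<equiv> split_cocycle Q E' s' r'"

lemma glued_map_hom:
  assumes a: "a \<in> hom Q Y Y'" and b: "b \<in> hom Q X X'" and w: "cochain Q X Y' w"
    and eq: "\<And>i. i < length (arr Q) \<Longrightarrow>
      a (tgt Q i) * \<kappa> i + w (tgt Q i) * rmat X i = rmat Y' i * w (src Q i) + \<kappa>' i * b (src Q i)"
  shows "glued_map Q \<alpha>' a r s' b \<beta> w \<in> hom Q E E'"
proof (rule homI)
  let ?\<phi> = "glued_map Q \<alpha>' a r s' b \<beta> w"
  note [simp] = e.dims e'.dims hom_dims[OF a] hom_dims[OF b] cochain_dims[OF w]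
    e.split_cocycle_dims e'.split_cocycle_dims
  fix i assume i: "i < length (arr Q)"
  note [simp] = i
  have lhs: "rmat E' i * ?\<phi> (src Q i) = \<alpha>' (tgt Q i) * (a (tgt Q i) * (rmat Y i * r (src Q i))) +
      (\<alpha>' (tgt Q i) * (\<kappa>' i * (b (src Q i) * \<beta> (src Q i))) +
       s' (tgt Q i) * (b (tgt Q i) * (rmat X i * \<beta> (src Q i)))) +
      \<alpha>' (tgt Q i) * (rmat Y' i * (w (src Q i) * \<beta> (src Q i)))"
    unfolding glued_map_def
    by (simp add: mat_arith hom_comm_mult[OF e.wf e.valid_Y e'.valid_Y a]
        hom_comm_mult[OF e.wf e.valid_X e'.valid_X b] hom_comm_mult[OF e.wf e'.valid_Y e'.valid_E e'.hom_\<alpha>]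
        e'.rmat_section_mult)
  have rhs: "?\<phi> (tgt Q i) * rmat E i = \<alpha>' (tgt Q i) * (a (tgt Q i) * (rmat Y i * r (src Q i))) +
      \<alpha>' (tgt Q i) * (a (tgt Q i) * (\<kappa> i * \<beta> (src Q i))) +
      s' (tgt Q i) * (b (tgt Q i) * (rmat X i * \<beta> (src Q i))) +
      \<alpha>' (tgt Q i) * (w (tgt Q i) * (rmat X i * \<beta> (src Q i)))"
    unfolding glued_map_def by (simp add: mat_arith hom_comm[OF e.hom_\<beta> i, symmetric] e.retraction_rmat)
  have "\<alpha>' (tgt Q i) * ((a (tgt Q i) * \<kappa> i + w (tgt Q i) * rmat X i) * \<beta> (src Q i)) =
      \<alpha>' (tgt Q i) * ((rmat Y' i * w (src Q i) + \<kappa>' i * b (src Q i)) * \<beta> (src Q i))"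
    by (simp add: eq[OF i])
  then have eq': "\<alpha>' (tgt Q i) * (a (tgt Q i) * (\<kappa> i * \<beta> (src Q i))) +
      \<alpha>' (tgt Q i) * (w (tgt Q i) * (rmat X i * \<beta> (src Q i))) =
      \<alpha>' (tgt Q i) * (rmat Y' i * (w (src Q i) * \<beta> (src Q i))) +
      \<alpha>' (tgt Q i) * (\<kappa>' i * (b (src Q i) * \<beta> (src Q i)))"
    by (simp add: mat_arith)
  show "rmat E' i * ?\<phi> (src Q i) = ?\<phi> (tgt Q i) * rmat E i"
    unfolding lhs rhs by (rule add_mat_eq_rearrange[OF _ _ _ _ _ _ eq']; rule carrier_matI; simp)
qed (auto simp: glued_map_def e.dims e'.dims hom_dims[OF a] hom_dims[OF b] cochain_dims[OF w]
      intro!: carrier_matI)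

lemma ext_hom_if_cohomologous:
  assumes a: "a \<in> hom Q Y Y'" and b: "b \<in> hom Q X X'"
    and "cohomologous Q X Y' (\<lambda>i. a (tgt Q i) * \<kappa> i) (\<lambda>i. \<kappa>' i * b (src Q i))"
  shows "\<exists>\<phi>. ext_hom Q Y X (E, \<alpha>, \<beta>) Y' X' (E', \<alpha>', \<beta>') a \<phi> b"
proof -
  from assms(3) obtain w where w: "cochain Q X Y' w" and
    eq: "\<And>i. i < length (arr Q) \<Longrightarrow>
      a (tgt Q i) * \<kappa> i + w (tgt Q i) * rmat X i = rmat Y' i * w (src Q i) + \<kappa>' i * b (src Q i)"
    unfolding cohomologous_def by blast
  let ?\<phi> = "glued_map Q \<alpha>' a r s' b \<beta> w"
  note [simp] = e.dims e'.dims hom_dims[OF a] hom_dims[OF b] cochain_dims[OF w]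
  have "comp Q ?\<phi> \<alpha> = comp Q \<alpha>' a"
    unfolding comp_eq_iff glued_map_def
    by (simp add: mat_arith splitting_eqs[OF e.spl] splitting_eqs_mult[OF e.spl e.ses])
  moreover have "comp Q \<beta>' ?\<phi> = comp Q b \<beta>"
    unfolding comp_eq_iff glued_map_def
    by (simp add: mat_arith splitting_eqs[OF e'.spl] splitting_eqs_mult[OF e'.spl e'.ses])
  ultimately have "ext_hom Q Y X (E, \<alpha>, \<beta>) Y' X' (E', \<alpha>', \<beta>') a ?\<phi> b"
    unfolding ext_hom_def using a b glued_map_hom[OF a b w eq] by simp
  then show ?thesis by blast
qed

lemma cohomologous_if_ext_hom:
  assumes "ext_hom Q Y X (E, \<alpha>, \<beta>) Y' X' (E', \<alpha>', \<beta>') a \<phi> b"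
  shows "cohomologous Q X Y' (\<lambda>i. a (tgt Q i) * \<kappa> i) (\<lambda>i. \<kappa>' i * b (src Q i))"
proof -
  have a: "a \<in> hom Q Y Y'" and b: "b \<in> hom Q X X'" and \<phi>: "\<phi> \<in> hom Q E E'"
    and c1: "comp Q \<phi> \<alpha> = comp Q \<alpha>' a" and c2: "comp Q \<beta>' \<phi> = comp Q b \<beta>"
    using assms unfolding ext_hom_def by auto
  note [simp] = e.dims e'.dims hom_dims[OF a] hom_dims[OF b] hom_dims[OF \<phi>]
    e.split_cocycle_dims e'.split_cocycle_dims
  have c1': "\<phi> v * (\<alpha> v * Z) = \<alpha>' v * (a v * Z)" if "v < nv Q" "dim_row Z = rdim Y v" for v Z
    using mult_mat_eq_assoc[of "\<phi> v" "\<alpha> v" "\<alpha>' v * a v" Z] c1 that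
    by (simp add: comp_eq_iff mat_arith)
  have c2': "\<beta>' v * (\<phi> v * Z) = b v * (\<beta> v * Z)" if "v < nv Q" "dim_row Z = rdim E v" for v Z
    using mult_mat_eq_assoc[of "\<beta>' v" "\<phi> v" "b v * \<beta> v" Z] c2 that
    by (simp add: comp_eq_iff mat_arith)
  show ?thesis
  proof (rule cohomologousI[OF cocycle_mult_left[OF e.wf e.split_cocycle_cocycle a]
        cocycle_mult_right[OF e.wf e'.split_cocycle_cocycle b]])
    show "cochain Q X Y' (\<lambda>v. r' v * \<phi> v * s v)" unfolding cochain_def by (auto intro!: carrier_matI)
    fix i assume i: "i < length (arr Q)"
    note [simp] = i
    let ?m = "r' (tgt Q i) * (rmat E' i * (\<phi> (src Q i) * s (src Q i)))"
    have "?m = a (tgt Q i) * \<kappa> i + r' (tgt Q i) * \<phi> (tgt Q i) * s (tgt Q i) * rmat X i"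
      by (simp add: mat_arith hom_comm_mult[OF e.wf e.valid_E e'.valid_E \<phi>] e.rmat_section c1'
          splitting_eqs_mult[OF e'.spl e'.ses])
    moreover have "?m = rmat Y' i * (r' (src Q i) * \<phi> (src Q i) * s (src Q i)) + \<kappa>' i * b (src Q i)"
      by (simp add: mat_arith e'.retraction_rmat_mult c2' splitting_eqs_mult[OF e.spl e.ses]
          splitting_eqs[OF e.spl])
    ultimately show "a (tgt Q i) * \<kappa> i + r' (tgt Q i) * \<phi> (tgt Q i) * s (tgt Q i) * rmat X i =
        rmat Y' i * (r' (src Q i) * \<phi> (src Q i) * s (src Q i)) + \<kappa>' i * b (src Q i)"
      by simp
  qed
qed

end


definition chosen_splitting :: "quiver \<Rightarrow> 'k::field rep \<Rightarrow> 'k rep \<Rightarrow> 'k rep \<Rightarrow> 'k rhom \<Rightarrow> 'k rhom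
    \<Rightarrow> 'k rhom \<times> 'k rhom" where
  "chosen_splitting Q Y E X \<alpha> \<beta> = (SOME sr. splitting Q Y E X \<alpha> \<beta> (fst sr) (snd sr))"

definition ext_cocycle :: "quiver \<Rightarrow> 'k::field rep \<Rightarrow> 'k rep \<Rightarrow> 'k ext \<Rightarrow> nat \<Rightarrow> 'k mat" where
  "ext_cocycle Q X Y e = (case e of (E, \<alpha>, \<beta>) \<Rightarrow>
     split_cocycle Q E (fst (chosen_splitting Q Y E X \<alpha> \<beta>)) (snd (chosen_splitting Q Y E X \<alpha> \<beta>)))"

lemma ext_of_split_ses:
  assumes "wf_quiver Q" "ext_of Q X Y (E, \<alpha>, \<beta>)"
  shows "split_ses Q Y E X \<alpha> \<beta> (fst (chosen_splitting Q Y E X \<alpha> \<beta>)) (snd (chosen_splitting Q Y E X \<alpha> \<beta>))"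
proof -
  have ses: "ses Q Y E X \<alpha> \<beta>" using assms(2) unfolding ext_of_def by simp
  from ses_has_splitting[OF ses] obtain s r where "splitting Q Y E X \<alpha> \<beta> s r" by blast
  then have "splitting Q Y E X \<alpha> \<beta> (fst (chosen_splitting Q Y E X \<alpha> \<beta>)) (snd (chosen_splitting Q Y E X \<alpha> \<beta>))"
    unfolding chosen_splitting_def by (metis (mono_tags, lifting) fst_conv snd_conv someI)
  then show ?thesis using ses assms(1) by (simp add: split_ses_def)
qed

lemma cocycle_ext_cocycle:
  assumes "wf_quiver Q" "ext_of Q X Y e"
  shows "cocycle Q X Y (ext_cocycle Q X Y e)"
proof -
  obtain E \<alpha> \<beta> where e: "e = (E, \<alpha>, \<beta>)" by (cases e) auto
  interpret split_ses Q Y E X \<alpha> \<beta> "fst (chosen_splitting Q Y E X \<alpha> \<beta>)" "snd (chosen_splitting Q Y E X \<alpha> \<beta>)"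
    using ext_of_split_ses assms e by blast
  show ?thesis unfolding ext_cocycle_def e using split_cocycle_cocycle by simp
qed

lemma ext_hom_iff_cohomologous:
  assumes wf: "wf_quiver Q" and e: "ext_of Q X Y e" and e': "ext_of Q X' Y' e'"
    and a: "a \<in> hom Q Y Y'" and b: "b \<in> hom Q X X'"
  shows "(\<exists>\<phi>. ext_hom Q Y X e Y' X' e' a \<phi> b) \<longleftrightarrow> cohomologous Q X Y'
    (\<lambda>i. a (tgt Q i) * ext_cocycle Q X Y e i) (\<lambda>i. ext_cocycle Q X' Y' e' i * b (src Q i))"
proof -
  obtain E \<alpha> \<beta> where E: "e = (E, \<alpha>, \<beta>)" by (cases e) auto
  obtain E' \<alpha>' \<beta>' where E': "e' = (E', \<alpha>', \<beta>')" by (cases e') auto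
  interpret split_ses_pair Q Y E X \<alpha> \<beta> "fst (chosen_splitting Q Y E X \<alpha> \<beta>)"
    "snd (chosen_splitting Q Y E X \<alpha> \<beta>)" Y' E' X' \<alpha>' \<beta>' "fst (chosen_splitting Q Y' E' X' \<alpha>' \<beta>')"
    "snd (chosen_splitting Q Y' E' X' \<alpha>' \<beta>')"
    unfolding split_ses_pair_def using ext_of_split_ses wf e e' E E' by blast
  show ?thesis unfolding E E' ext_cocycle_def prod.case
    using ext_hom_if_cohomologous[OF a b] cohomologous_if_ext_hom by blast
qed

lemma idh_mult_cocycle:
  "wf_quiver Q \<Longrightarrow> cocycle Q X Y h \<Longrightarrow> a < length (arr Q) \<Longrightarrow> idh Q Y (tgt Q a) * h a = h a"
  by (simp add: idh_apply wf_quiverD cocycle_dims)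

lemma cocycle_mult_idh:
  "wf_quiver Q \<Longrightarrow> cocycle Q X Y h \<Longrightarrow> a < length (arr Q) \<Longrightarrow> h a * idh Q X (src Q a) = h a"
  by (simp add: idh_apply wf_quiverD cocycle_dims)

lemma cohomologous_idh_iff:
  assumes "wf_quiver Q" "cocycle Q X Y h" "cocycle Q X Y h'"
  shows "cohomologous Q X Y (\<lambda>i. idh Q Y (tgt Q i) * h i) (\<lambda>i. h' i * idh Q X (src Q i)) \<longleftrightarrow>
    cohomologous Q X Y h h'"
  using assms by (intro cohomologous_cong) (simp_all add: idh_mult_cocycle cocycle_mult_idh)

lemma split_cocycles_cohomologous:
  assumes "split_ses Q Y E X \<alpha> \<beta> s r" and "split_ses Q Y E X \<alpha> \<beta> s' r'"
  shows "cohomologous Q X Y (split_cocycle Q E s r) (split_cocycle Q E s' r')"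
proof -
  interpret split_ses_pair Q Y E X \<alpha> \<beta> s r Y E X \<alpha> \<beta> s' r'
    unfolding split_ses_pair_def using assms by blast
  have "ext_hom Q Y X (E, \<alpha>, \<beta>) Y X (E, \<alpha>, \<beta>) (idh Q Y) (idh Q E) (idh Q X)"
    unfolding ext_hom_def using idh_hom[OF e.wf] e.valid_Y e.valid_E e.valid_X
    by (auto simp: comp_eq_iff idh_apply e.dims)
  from cohomologous_if_ext_hom[OF this] show ?thesis
    using cohomologous_idh_iff[OF e.wf e.split_cocycle_cocycle e'.split_cocycle_cocycle] by simp
qed

lemma ext_equiv_iff_cohomologous:
  assumes wf: "wf_quiver Q" and e: "ext_of Q X Y e" and e': "ext_of Q X Y e'"
  shows "(\<exists>\<phi>. ext_hom Q Y X e Y X e' (idh Q Y) \<phi> (idh Q X)) \<longleftrightarrow>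
    cohomologous Q X Y (ext_cocycle Q X Y e) (ext_cocycle Q X Y e')"
proof -
  have "valid_rep Q X" "valid_rep Q Y" using e unfolding ext_of_def ses_def by (cases e; auto)+
  then show ?thesis
    using ext_hom_iff_cohomologous[OF wf e e' idh_hom[OF wf] idh_hom[OF wf]]
      cohomologous_idh_iff[OF wf cocycle_ext_cocycle[OF wf e] cocycle_ext_cocycle[OF wf e']] by simp
qed

definition cocycle_cls :: "quiver \<Rightarrow> 'k::field rep \<Rightarrow> 'k rep \<Rightarrow> (nat \<Rightarrow> 'k mat) \<Rightarrow> 'k ext set" where
  "cocycle_cls Q X Y h = {e. ext_of Q X Y e \<and> cohomologous Q X Y h (ext_cocycle Q X Y e)}"

lemma ext_cls_eq_cocycle_cls:
  "wf_quiver Q \<Longrightarrow> ext_of Q X Y e \<Longrightarrow> ext_cls Q X Y e = cocycle_cls Q X Y (ext_cocycle Q X Y e)"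
  unfolding ext_cls_def cocycle_cls_def using ext_equiv_iff_cohomologous by blast

lemma cocycle_cls_eq_if_cohomologous:
  assumes wf: "wf_quiver Q" and X: "valid_rep Q X" and Y: "valid_rep Q Y"
    and "cohomologous Q X Y h h'"
  shows "cocycle_cls Q X Y h = cocycle_cls Q X Y h'"
  unfolding cocycle_cls_def
  using cohomologous_trans[OF wf X Y] cohomologous_sym[OF wf X Y] assms(4) by blast


section \<open>The standard extension of a cocycle\<close>

definition inl_mat :: "nat \<Rightarrow> nat \<Rightarrow> 'a::semiring_1 mat" where
  "inl_mat n1 n2 = mat (n1 + n2) n1 (\<lambda>(i, j). if i = j then 1 else 0)"

definition inr_mat :: "nat \<Rightarrow> nat \<Rightarrow> 'a::semiring_1 mat" where
  "inr_mat n1 n2 = mat (n1 + n2) n2 (\<lambda>(i, j). if i = j + n1 then 1 else 0)"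

definition projl_mat :: "nat \<Rightarrow> nat \<Rightarrow> 'a::semiring_1 mat" where
  "projl_mat n1 n2 = mat n1 (n1 + n2) (\<lambda>(i, j). if i = j then 1 else 0)"

definition projr_mat :: "nat \<Rightarrow> nat \<Rightarrow> 'a::semiring_1 mat" where
  "projr_mat n1 n2 = mat n2 (n1 + n2) (\<lambda>(i, j). if j = i + n1 then 1 else 0)"

lemma biproduct_mat_dims [simp]:
  "dim_row (inl_mat n1 n2) = n1 + n2" "dim_col (inl_mat n1 n2) = n1"
  "dim_row (inr_mat n1 n2) = n1 + n2" "dim_col (inr_mat n1 n2) = n2"
  "dim_row (projl_mat n1 n2) = n1" "dim_col (projl_mat n1 n2) = n1 + n2"
  "dim_row (projr_mat n1 n2) = n2" "dim_col (projr_mat n1 n2) = n1 + n2"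
  unfolding inl_mat_def inr_mat_def projl_mat_def projr_mat_def by simp_all

lemma if_one_mult: "(if P then (1::'a::semiring_1) else 0) * x = (if P then x else 0)"
  by simp

lemma biproduct_mat_eqs:
  "projl_mat n1 n2 * inl_mat n1 n2 = (1\<^sub>m n1 :: 'a::semiring_1 mat)"
  "projr_mat n1 n2 * inr_mat n1 n2 = (1\<^sub>m n2 :: 'a::semiring_1 mat)"
  "projl_mat n1 n2 * inr_mat n1 n2 = (0\<^sub>m n1 n2 :: 'a::semiring_1 mat)"
  "projr_mat n1 n2 * inl_mat n1 n2 = (0\<^sub>m n2 n1 :: 'a::semiring_1 mat)"
  by (rule eq_matI;
      auto simp: inl_mat_def inr_mat_def projl_mat_def projr_mat_def scalar_prod_def if_one_mult)+

lemma inl_projl_add_inr_projr: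
  "inl_mat n1 n2 * projl_mat n1 n2 + inr_mat n1 n2 * projr_mat n1 n2 = (1\<^sub>m (n1 + n2) :: 'a::semiring_1 mat)"
proof (rule eq_matI)
  fix i j assume "i < dim_row (1\<^sub>m (n1 + n2) :: 'a mat)" "j < dim_col (1\<^sub>m (n1 + n2) :: 'a mat)"
  then have i: "i < n1 + n2" and j: "j < n1 + n2" by simp_all
  have l: "(inl_mat n1 n2 * projl_mat n1 n2 :: 'a mat) $$ (i, j) =
      (\<Sum>k\<in>{0..<n1}. if k = i then (if k = j then 1 else 0) else 0)"
    using i j by (simp add: inl_mat_def projl_mat_def scalar_prod_def if_one_mult)
  have r: "(inr_mat n1 n2 * projr_mat n1 n2 :: 'a mat) $$ (i, j) =
      (\<Sum>k\<in>{0..<n2}. if i = k + n1 then (if j = k + n1 then 1 else 0) else 0)"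
    using i j by (simp add: inr_mat_def projr_mat_def scalar_prod_def if_one_mult)
  show "(inl_mat n1 n2 * projl_mat n1 n2 + inr_mat n1 n2 * projr_mat n1 n2) $$ (i, j) =
      (1\<^sub>m (n1 + n2) :: 'a mat) $$ (i, j)"
  proof (cases "i < n1")
    case True
    then have "(\<Sum>k\<in>{0..<n2}. if i = k + n1 then (if j = k + n1 then 1 else 0) else (0::'a)) = 0"
      by (intro sum.neutral) auto
    then show ?thesis using i j l r True by simp
  next
    case False
    have "(\<Sum>k\<in>{0..<n1}. if k = i then (if k = j then 1 else 0) else (0::'a)) = 0"
      using False by (intro sum.neutral) auto
    moreover have "(\<Sum>k\<in>{0..<n2}. if i = k + n1 then (if j = k + n1 then 1 else 0) else (0::'a)) =
        (\<Sum>k\<in>{0..<n2}. if k = i - n1 then (if j = k + n1 then 1 else 0) else 0)"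
      using False by (intro sum.cong) auto
    moreover have "\<dots> = (if j = i then 1 else 0)" using False i by auto
    ultimately show ?thesis using i j l r False by simp
  qed
qed simp_all

lemma mat_splitting_biproduct:
  "mat_splitting (inl_mat n1 n2) (projr_mat n1 n2) (inr_mat n1 n2) (projl_mat n1 n2 :: 'a::semiring_1 mat)
    n1 (n1 + n2) n2"
  unfolding mat_splitting_def by (auto simp: biproduct_mat_eqs inl_projl_add_inr_projr intro!: carrier_matI)

lemma biproduct_mat_eqs_mult:
  fixes Z :: "'a::semiring_1 mat"
  shows "dim_row Z = n1 \<Longrightarrow> projl_mat n1 n2 * (inl_mat n1 n2 * Z) = Z"
    "dim_row Z = n2 \<Longrightarrow> projr_mat n1 n2 * (inr_mat n1 n2 * Z) = Z"
    "dim_row Z = n2 \<Longrightarrow> projl_mat n1 n2 * (inr_mat n1 n2 * Z) = 0\<^sub>m n1 (dim_col Z)"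
    "dim_row Z = n1 \<Longrightarrow> projr_mat n1 n2 * (inl_mat n1 n2 * Z) = 0\<^sub>m n2 (dim_col Z)"
  using biproduct_mat_eqs[of n1 n2, THEN mult_mat_eq_assoc, of Z] by simp_all

lemmas biproduct_mat_simps = biproduct_mat_eqs biproduct_mat_eqs_mult

definition std_rep :: "quiver \<Rightarrow> 'k::field rep \<Rightarrow> 'k rep \<Rightarrow> (nat \<Rightarrow> 'k mat) \<Rightarrow> 'k rep" where
  "std_rep Q X Y h = \<lparr>rdim = (\<lambda>v. rdim Y v + rdim X v),
     rmat = (\<lambda>a. inl_mat (rdim Y (tgt Q a)) (rdim X (tgt Q a)) * rmat Y a * projl_mat (rdim Y (src Q a)) (rdim X (src Q a))
       + inl_mat (rdim Y (tgt Q a)) (rdim X (tgt Q a)) * h a * projr_mat (rdim Y (src Q a)) (rdim X (src Q a))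
       + inr_mat (rdim Y (tgt Q a)) (rdim X (tgt Q a)) * rmat X a * projr_mat (rdim Y (src Q a)) (rdim X (src Q a)))\<rparr>"

definition std_in :: "quiver \<Rightarrow> 'k::field rep \<Rightarrow> 'k rep \<Rightarrow> 'k rhom" where
  "std_in Q X Y = (\<lambda>v. if v < nv Q then inl_mat (rdim Y v) (rdim X v) else 0\<^sub>m 0 0)"

definition std_pr :: "quiver \<Rightarrow> 'k::field rep \<Rightarrow> 'k rep \<Rightarrow> 'k rhom" where
  "std_pr Q X Y = (\<lambda>v. if v < nv Q then projr_mat (rdim Y v) (rdim X v) else 0\<^sub>m 0 0)"

definition std_ext :: "quiver \<Rightarrow> 'k::field rep \<Rightarrow> 'k rep \<Rightarrow> (nat \<Rightarrow> 'k mat) \<Rightarrow> 'k ext" where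
  "std_ext Q X Y h = (std_rep Q X Y h, std_in Q X Y, std_pr Q X Y)"

context
  fixes Q :: quiver and X Y :: "'k::field rep" and h :: "nat \<Rightarrow> 'k mat"
  assumes wf: "wf_quiver Q" and X: "valid_rep Q X" and Y: "valid_rep Q Y" and h: "cocycle Q X Y h"
begin

lemmas std_dims = wf_quiverD[OF wf] valid_rep_dims[OF X] valid_rep_dims[OF Y] cocycle_dims[OF h]

lemma std_rep_simps:
  "rdim (std_rep Q X Y h) v = rdim Y v + rdim X v"
  "rmat (std_rep Q X Y h) a =
     inl_mat (rdim Y (tgt Q a)) (rdim X (tgt Q a)) * rmat Y a * projl_mat (rdim Y (src Q a)) (rdim X (src Q a))
     + inl_mat (rdim Y (tgt Q a)) (rdim X (tgt Q a)) * h a * projr_mat (rdim Y (src Q a)) (rdim X (src Q a))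
     + inr_mat (rdim Y (tgt Q a)) (rdim X (tgt Q a)) * rmat X a * projr_mat (rdim Y (src Q a)) (rdim X (src Q a))"
  unfolding std_rep_def by simp_all

lemma std_ses: "ses Q Y (std_rep Q X Y h) X (std_in Q X Y) (std_pr Q X Y)"
proof -
  have valid: "valid_rep Q (std_rep Q X Y h)"
    unfolding valid_rep_def std_rep_simps using std_dims by (auto intro!: carrier_matI)
  have "std_in Q X Y \<in> hom Q Y (std_rep Q X Y h)"
    by (rule homI) (auto simp: std_in_def std_rep_simps std_dims mat_arith biproduct_mat_simps intro!: carrier_matI)
  moreover have "std_pr Q X Y \<in> hom Q (std_rep Q X Y h) X"
    by (rule homI) (auto simp: std_pr_def std_rep_simps std_dims mat_arith biproduct_mat_simps intro!: carrier_matI)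
  moreover have "mat_splitting (std_in Q X Y v) (std_pr Q X Y v) (inr_mat (rdim Y v) (rdim X v))
      (projl_mat (rdim Y v) (rdim X v)) (rdim Y v) (rdim Y v + rdim X v) (rdim X v)" if "v < nv Q" for v
    using that mat_splitting_biproduct by (simp add: std_in_def std_pr_def)
  ultimately show ?thesis
    unfolding ses_def using valid X Y mat_splitting_short_exact by (simp add: std_rep_simps) blast
qed

lemma std_split_ses:
  "split_ses Q Y (std_rep Q X Y h) X (std_in Q X Y) (std_pr Q X Y)
     (\<lambda>v. inr_mat (rdim Y v) (rdim X v)) (\<lambda>v. projl_mat (rdim Y v) (rdim X v))"
  unfolding split_ses_def splitting_def using wf std_ses
  by (simp add: std_in_def std_pr_def std_rep_simps mat_splitting_biproduct)

lemma std_ext_of: "ext_of Q X Y (std_ext Q X Y h)"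
  unfolding ext_of_def std_ext_def using std_ses by simp

lemma cohomologous_ext_cocycle_std: "cohomologous Q X Y h (ext_cocycle Q X Y (std_ext Q X Y h))"
proof -
  have "split_ses Q Y (std_rep Q X Y h) X (std_in Q X Y) (std_pr Q X Y)
      (fst (chosen_splitting Q Y (std_rep Q X Y h) X (std_in Q X Y) (std_pr Q X Y)))
      (snd (chosen_splitting Q Y (std_rep Q X Y h) X (std_in Q X Y) (std_pr Q X Y)))"
    using ext_of_split_ses[OF wf std_ext_of[unfolded std_ext_def]] .
  from split_cocycles_cohomologous[OF std_split_ses this] show ?thesis
    unfolding ext_cocycle_def std_ext_def prod.case
    by (subst (asm) cohomologous_cong[where h' = h])
      (simp_all add: split_cocycle_def std_rep_simps std_dims mat_arith biproduct_mat_simps)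
qed

lemma std_ext_in_cocycle_cls: "std_ext Q X Y h \<in> cocycle_cls Q X Y h"
  unfolding cocycle_cls_def using std_ext_of cohomologous_ext_cocycle_std by blast

end


section \<open>\<open>Ext\<^sup>1\<close> as cohomology\<close>

context
  fixes Q :: quiver and X Y :: "'k::field rep"
  assumes wf: "wf_quiver Q" and X: "valid_rep Q X" and Y: "valid_rep Q Y"
begin

lemma Ext1_eq_cocycle_classes: "Ext1 Q X Y = {cocycle_cls Q X Y h | h. cocycle Q X Y h}"
proof
  show "Ext1 Q X Y \<subseteq> {cocycle_cls Q X Y h | h. cocycle Q X Y h}"
    unfolding Ext1_def using ext_cls_eq_cocycle_cls[OF wf] cocycle_ext_cocycle[OF wf] by blast
next
  have "cocycle_cls Q X Y h = ext_cls Q X Y (std_ext Q X Y h)" if h: "cocycle Q X Y h" for h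
    using ext_cls_eq_cocycle_cls[OF wf std_ext_of[OF wf X Y h]]
      cocycle_cls_eq_if_cohomologous[OF wf X Y cohomologous_ext_cocycle_std[OF wf X Y h]] by simp
  then show "{cocycle_cls Q X Y h | h. cocycle Q X Y h} \<subseteq> Ext1 Q X Y"
    unfolding Ext1_def using std_ext_of[OF wf X Y] by blast
qed

lemma cocycle_cls_eq_iff:
  assumes h: "cocycle Q X Y h"
  shows "cocycle_cls Q X Y h = cocycle_cls Q X Y h' \<longleftrightarrow> cohomologous Q X Y h h'"
proof
  assume "cocycle_cls Q X Y h = cocycle_cls Q X Y h'"
  then have "cohomologous Q X Y h' (ext_cocycle Q X Y (std_ext Q X Y h))"
    using std_ext_in_cocycle_cls[OF wf X Y h] unfolding cocycle_cls_def by blast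
  then show "cohomologous Q X Y h h'"
    using cohomologous_trans[OF wf X Y cohomologous_ext_cocycle_std[OF wf X Y h]]
      cohomologous_sym[OF wf X Y] by blast
qed (rule cocycle_cls_eq_if_cohomologous[OF wf X Y])

end

text \<open>The family \<open>\<lambda>a. split_cocycle Q E s r a * f (src Q a)\<close> is the cocycle of the pullback of
  the extension along \<open>f\<close>, so the next lemmas say that \<open>f\<close> lifts along \<open>\<beta>\<close> iff that pullback splits.\<close>

lemma (in split_ses) cohomologous_zero_if_lift:
  assumes G: "valid_rep Q G" and f: "f \<in> hom Q G X" and g: "g \<in> hom Q G E" and \<beta>g: "comp Q \<beta> g = f"
  shows "cohomologous Q G Y (zero_cocycle Q G Y) (\<lambda>a. split_cocycle Q E s r a * f (src Q a))"
proof -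
  note [simp] = dims split_cocycle_dims hom_dims[OF g] hom_dims[OF f] valid_rep_dims[OF G]
  have \<beta>gv: "\<beta> v * g v = f v" if "v < nv Q" for v
    using fun_cong[OF \<beta>g, of v] that by (simp add: comp_apply)
  show "cohomologous Q G Y (zero_cocycle Q G Y) (\<lambda>a. split_cocycle Q E s r a * f (src Q a))"
  proof (rule cohomologousI[OF cocycle_zero_cocycle cocycle_mult_right[OF wf split_cocycle_cocycle f]])
    show "cochain Q G Y (\<lambda>v. r v * g v)" unfolding cochain_def by (auto intro!: carrier_matI)
    fix a assume a: "a < length (arr Q)"
    have "r (tgt Q a) * (rmat E a * g (src Q a)) =
        rmat Y a * (r (src Q a) * g (src Q a)) + split_cocycle Q E s r a * f (src Q a)"
      using retraction_rmat_mult[OF a, of "g (src Q a)"] a by (simp add: \<beta>gv)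
    then show "zero_cocycle Q G Y a + r (tgt Q a) * g (tgt Q a) * rmat G a =
        rmat Y a * (r (src Q a) * g (src Q a)) + split_cocycle Q E s r a * f (src Q a)"
      using a by (simp add: zero_cocycle_def hom_comm[OF g a] mat_arith)
  qed
qed

lemma (in split_ses) lift_if_cohomologous_zero:
  assumes G: "valid_rep Q G" and f: "f \<in> hom Q G X"
    and "cohomologous Q G Y (zero_cocycle Q G Y) (\<lambda>a. split_cocycle Q E s r a * f (src Q a))"
  shows "\<exists>g\<in>hom Q G E. comp Q \<beta> g = f"
proof -
  from assms(3) obtain w where w: "cochain Q G Y w" and eq: "\<And>a. a < length (arr Q) \<Longrightarrow>
      zero_cocycle Q G Y a + w (tgt Q a) * rmat G a =
      rmat Y a * w (src Q a) + split_cocycle Q E s r a * f (src Q a)"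
    unfolding cohomologous_def by blast
  note [simp] = dims split_cocycle_dims cochain_dims[OF w] hom_dims[OF f] valid_rep_dims[OF G]
  define g where "g = (\<lambda>v. if v < nv Q then s v * f v + \<alpha> v * w v else 0\<^sub>m 0 0)"
  have "g \<in> hom Q G E"
  proof (rule homI)
    fix a assume a: "a < length (arr Q)"
    let ?\<kappa>f = "split_cocycle Q E s r a * f (src Q a)"
    have \<alpha>eq: "\<alpha> (tgt Q a) * (w (tgt Q a) * rmat G a) =
        \<alpha> (tgt Q a) * (rmat Y a * w (src Q a)) + \<alpha> (tgt Q a) * ?\<kappa>f"
      using arg_cong[OF eq[OF a], of "\<lambda>A. \<alpha> (tgt Q a) * A"] a
      by (simp add: zero_cocycle_def mat_arith)
    have "rmat E a * g (src Q a) = (\<alpha> (tgt Q a) * ?\<kappa>f + s (tgt Q a) * (f (tgt Q a) * rmat G a)) +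
        \<alpha> (tgt Q a) * (rmat Y a * w (src Q a))"
      using a by (simp add: g_def mat_arith rmat_section_mult hom_comm[OF f a]
          hom_comm_mult[OF wf valid_Y valid_E hom_\<alpha>])
    also have "\<dots> = s (tgt Q a) * (f (tgt Q a) * rmat G a) +
        (\<alpha> (tgt Q a) * (rmat Y a * w (src Q a)) + \<alpha> (tgt Q a) * ?\<kappa>f)"
      using a by (auto simp: mat_eq_iff)
    also have "\<dots> = g (tgt Q a) * rmat G a"
      using a by (simp add: g_def \<alpha>eq[symmetric] mat_arith)
    finally show "rmat E a * g (src Q a) = g (tgt Q a) * rmat G a" .
  qed (auto simp: g_def intro!: carrier_matI)
  moreover have "comp Q \<beta> g = f"
    by (auto simp: fun_eq_iff comp_def g_def mat_arith splitting_eqs_mult[OF spl ses]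
        hom_outside[OF f])
  ultimately show "\<exists>g\<in>hom Q G E. comp Q \<beta> g = f" by blast
qed

lemma (in split_ses) lift_iff_cohomologous_zero:
  assumes G: "valid_rep Q G" and f: "f \<in> hom Q G X"
  shows "(\<exists>g\<in>hom Q G E. comp Q \<beta> g = f) \<longleftrightarrow>
    cohomologous Q G Y (zero_cocycle Q G Y) (\<lambda>a. split_cocycle Q E s r a * f (src Q a))"
  using cohomologous_zero_if_lift[OF G f] lift_if_cohomologous_zero[OF G f] by blast

lemma (in split_ses) section_iff_cohomologous_zero:
  "(\<exists>\<sigma>\<in>hom Q X E. comp Q \<beta> \<sigma> = idh Q X) \<longleftrightarrow>
    cohomologous Q X Y (zero_cocycle Q X Y) (split_cocycle Q E s r)"
  unfolding lift_iff_cohomologous_zero[OF valid_X idh_hom[OF wf valid_X]]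
  using split_cocycle_cocycle
  by (intro cohomologous_cong) (simp_all add: wf cocycle_mult_idh)

lemma split_cls_eq_cocycle_cls_zero:
  assumes wf: "wf_quiver Q"
  shows "split_cls Q X Y = cocycle_cls Q X Y (zero_cocycle Q X Y)"
proof -
  have "(\<exists>\<sigma>\<in>hom Q X E. comp Q \<beta> \<sigma> = idh Q X) \<longleftrightarrow>
      cohomologous Q X Y (zero_cocycle Q X Y) (ext_cocycle Q X Y (E, \<alpha>, \<beta>))"
    if "ext_of Q X Y (E, \<alpha>, \<beta>)" for E \<alpha> \<beta>
  proof -
    interpret split_ses Q Y E X \<alpha> \<beta> "fst (chosen_splitting Q Y E X \<alpha> \<beta>)"
      "snd (chosen_splitting Q Y E X \<alpha> \<beta>)"
      using ext_of_split_ses[OF wf that] .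
    show ?thesis unfolding ext_cocycle_def prod.case by (rule section_iff_cohomologous_zero)
  qed
  then show ?thesis unfolding split_cls_def cocycle_cls_def by auto
qed

lemma push_ext_hom_iff:
  assumes wf: "wf_quiver Q" and e: "ext_of Q X Y e" and e': "ext_of Q X Y' e'" and g: "g \<in> hom Q Y Y'"
  shows "(\<exists>\<phi>. ext_hom Q Y X e Y' X e' g \<phi> (idh Q X)) \<longleftrightarrow>
    cohomologous Q X Y' (\<lambda>a. g (tgt Q a) * ext_cocycle Q X Y e a) (ext_cocycle Q X Y' e')"
proof -
  have "valid_rep Q X" using e unfolding ext_of_def ses_def by (cases e) auto
  then have "(\<exists>\<phi>. ext_hom Q Y X e Y' X e' g \<phi> (idh Q X)) \<longleftrightarrow> cohomologous Q X Y'
      (\<lambda>a. g (tgt Q a) * ext_cocycle Q X Y e a) (\<lambda>a. ext_cocycle Q X Y' e' a * idh Q X (src Q a))"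
    by (rule ext_hom_iff_cohomologous[OF wf e e' g idh_hom[OF wf]])
  also have "\<dots> \<longleftrightarrow> cohomologous Q X Y' (\<lambda>a. g (tgt Q a) * ext_cocycle Q X Y e a) (ext_cocycle Q X Y' e')"
    using cocycle_ext_cocycle[OF wf e'] by (intro cohomologous_cong) (simp_all add: wf idh_mult_cocycle cocycle_mult_idh)
  finally show ?thesis .
qed

lemma pull_ext_hom_iff:
  assumes wf: "wf_quiver Q" and e: "ext_of Q X Y e" and e': "ext_of Q X' Y e'" and f: "f \<in> hom Q X' X"
  shows "(\<exists>\<phi>. ext_hom Q Y X' e' Y X e (idh Q Y) \<phi> f) \<longleftrightarrow>
    cohomologous Q X' Y (ext_cocycle Q X' Y e') (\<lambda>a. ext_cocycle Q X Y e a * f (src Q a))"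
proof -
  have "valid_rep Q Y" using e unfolding ext_of_def ses_def by (cases e) auto
  then have "(\<exists>\<phi>. ext_hom Q Y X' e' Y X e (idh Q Y) \<phi> f) \<longleftrightarrow> cohomologous Q X' Y
      (\<lambda>a. idh Q Y (tgt Q a) * ext_cocycle Q X' Y e' a) (\<lambda>a. ext_cocycle Q X Y e a * f (src Q a))"
    by (rule ext_hom_iff_cohomologous[OF wf e' e idh_hom[OF wf] f])
  also have "\<dots> \<longleftrightarrow> cohomologous Q X' Y (ext_cocycle Q X' Y e') (\<lambda>a. ext_cocycle Q X Y e a * f (src Q a))"
    using cocycle_ext_cocycle[OF wf e'] by (intro cohomologous_cong) (simp_all add: wf idh_mult_cocycle cocycle_mult_idh)
  finally show ?thesis .
qed

lemma push_cocycle_cls: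
  assumes wf: "wf_quiver Q" and X: "valid_rep Q X" and Y: "valid_rep Q Y" and Y': "valid_rep Q Y'"
    and h: "cocycle Q X Y h" and g: "g \<in> hom Q Y Y'"
  shows "push Q X Y Y' g (cocycle_cls Q X Y h) = cocycle_cls Q X Y' (\<lambda>a. g (tgt Q a) * h a)"
proof (intro Set.set_eqI iffI)
  fix e' assume "e' \<in> push Q X Y Y' g (cocycle_cls Q X Y h)"
  then obtain e \<phi> where e': "ext_of Q X Y' e'" and e: "ext_of Q X Y e"
    and he: "cohomologous Q X Y h (ext_cocycle Q X Y e)" and "ext_hom Q Y X e Y' X e' g \<phi> (idh Q X)"
    unfolding push_def cocycle_cls_def by blast
  then have "cohomologous Q X Y' (\<lambda>a. g (tgt Q a) * ext_cocycle Q X Y e a) (ext_cocycle Q X Y' e')"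
    using push_ext_hom_iff[OF wf e e' g] by blast
  with cohomologous_mult_left[OF wf X Y Y' g he] e'
  show "e' \<in> cocycle_cls Q X Y' (\<lambda>a. g (tgt Q a) * h a)"
    unfolding cocycle_cls_def using cohomologous_trans[OF wf X Y'] by blast
next
  fix e' assume "e' \<in> cocycle_cls Q X Y' (\<lambda>a. g (tgt Q a) * h a)"
  then have e': "ext_of Q X Y' e'" and c: "cohomologous Q X Y' (\<lambda>a. g (tgt Q a) * h a) (ext_cocycle Q X Y' e')"
    unfolding cocycle_cls_def by auto
  let ?e = "std_ext Q X Y h"
  have "cohomologous Q X Y' (\<lambda>a. g (tgt Q a) * ext_cocycle Q X Y ?e a) (\<lambda>a. g (tgt Q a) * h a)"
    using cohomologous_mult_left[OF wf X Y Y' g cohomologous_sym[OF wf X Y cohomologous_ext_cocycle_std[OF wf X Y h]]] .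
  with c have "\<exists>\<phi>. ext_hom Q Y X ?e Y' X e' g \<phi> (idh Q X)"
    using push_ext_hom_iff[OF wf std_ext_of[OF wf X Y h] e' g] cohomologous_trans[OF wf X Y'] by blast
  then show "e' \<in> push Q X Y Y' g (cocycle_cls Q X Y h)"
    unfolding push_def using e' std_ext_in_cocycle_cls[OF wf X Y h] by blast
qed

lemma pull_cocycle_cls:
  assumes wf: "wf_quiver Q" and X: "valid_rep Q X" and Y: "valid_rep Q Y" and X': "valid_rep Q X'"
    and h: "cocycle Q X Y h" and f: "f \<in> hom Q X' X"
  shows "pull Q X' X Y f (cocycle_cls Q X Y h) = cocycle_cls Q X' Y (\<lambda>a. h a * f (src Q a))"
proof (intro Set.set_eqI iffI)
  fix e' assume "e' \<in> pull Q X' X Y f (cocycle_cls Q X Y h)"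
  then obtain e \<phi> where e': "ext_of Q X' Y e'" and e: "ext_of Q X Y e"
    and he: "cohomologous Q X Y h (ext_cocycle Q X Y e)" and "ext_hom Q Y X' e' Y X e (idh Q Y) \<phi> f"
    unfolding pull_def cocycle_cls_def by blast
  then have "cohomologous Q X' Y (ext_cocycle Q X' Y e') (\<lambda>a. ext_cocycle Q X Y e a * f (src Q a))"
    using pull_ext_hom_iff[OF wf e e' f] by blast
  with cohomologous_mult_right[OF wf X Y X' f he] e'
  show "e' \<in> cocycle_cls Q X' Y (\<lambda>a. h a * f (src Q a))"
    unfolding cocycle_cls_def using cohomologous_trans[OF wf X' Y] cohomologous_sym[OF wf X' Y] by blast
next
  fix e' assume "e' \<in> cocycle_cls Q X' Y (\<lambda>a. h a * f (src Q a))"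
  then have e': "ext_of Q X' Y e'" and c: "cohomologous Q X' Y (\<lambda>a. h a * f (src Q a)) (ext_cocycle Q X' Y e')"
    unfolding cocycle_cls_def by auto
  let ?e = "std_ext Q X Y h"
  have "cohomologous Q X' Y (\<lambda>a. h a * f (src Q a)) (\<lambda>a. ext_cocycle Q X Y ?e a * f (src Q a))"
    using cohomologous_mult_right[OF wf X Y X' f cohomologous_ext_cocycle_std[OF wf X Y h]] .
  with c have "\<exists>\<phi>. ext_hom Q Y X' e' Y X ?e (idh Q Y) \<phi> f"
    using pull_ext_hom_iff[OF wf std_ext_of[OF wf X Y h] e' f]
      cohomologous_trans[OF wf X' Y] cohomologous_sym[OF wf X' Y] by blast
  then show "e' \<in> pull Q X' X Y f (cocycle_cls Q X Y h)"
    unfolding pull_def using e' std_ext_in_cocycle_cls[OF wf X Y h] by blast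
qed


section \<open>The Hom--Ext sequence of a short exact sequence\<close>

locale ses_module =
  fixes Q :: quiver and M K N G :: "'k::field rep" and \<iota> p :: "'k rhom"
  assumes quiver_wf: "wf_quiver Q" and ses_MKN: "ses Q M K N \<iota> p" and valid_G: "valid_rep Q G"
begin

abbreviation "s \<equiv> fst (chosen_splitting Q M K N \<iota> p)"
abbreviation "r \<equiv> snd (chosen_splitting Q M K N \<iota> p)"
abbreviation "\<kappa> \<equiv> split_cocycle Q K s r"
abbreviation "\<eta> \<equiv> ext_cls Q N M (K, \<iota>, p)"

lemma ext_of_MKN: "ext_of Q N M (K, \<iota>, p)"
  unfolding ext_of_def using ses_MKN by simp

sublocale split_ses Q M K N \<iota> p s r
  using ext_of_split_ses[OF quiver_wf ext_of_MKN] .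

lemmas valid_M = valid_Y and valid_K = valid_E and valid_N = valid_X
  and hom_\<iota> = hom_\<alpha> and hom_p = hom_\<beta>

lemmas G_dims = dims valid_rep_dims[OF valid_G] split_cocycle_dims

lemma \<eta>_eq: "\<eta> = cocycle_cls Q N M \<kappa>"
  using ext_cls_eq_cocycle_cls[OF wf ext_of_MKN] unfolding ext_cocycle_def by simp

lemma Hom_exact_at_M:
  assumes f: "f \<in> hom Q G M"
  shows "comp Q \<iota> f = zeroh Q G K \<longleftrightarrow> f = zeroh Q G M"
proof
  assume z: "comp Q \<iota> f = zeroh Q G K"
  show "f = zeroh Q G M"
  proof
    fix v show "f v = zeroh Q G M v"
    proof (cases "v < nv Q")
      case True
      note [simp] = True G_dims hom_dims[OF f]
      have "\<iota> v * f v = 0\<^sub>m (rdim K v) (rdim G v)"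
        using fun_cong[OF z, of v] by (simp add: comp_apply zeroh_apply)
      then have "r v * (\<iota> v * f v) = 0\<^sub>m (rdim M v) (rdim G v)" by simp
      then show ?thesis by (simp add: splitting_eqs_mult[OF spl ses] zeroh_apply)
    qed (simp add: hom_outside[OF f] zeroh_def)
  qed
qed (simp add: comp_zeroh[OF hom_\<iota>])

lemma Hom_exact_at_K:
  assumes f: "f \<in> hom Q G K"
  shows "comp Q p f = zeroh Q G N \<longleftrightarrow> (\<exists>g\<in>hom Q G M. comp Q \<iota> g = f)"
proof
  assume z: "comp Q p f = zeroh Q G N"
  note [simp] = G_dims hom_dims[OF f]
  have pf: "p v * f v = 0\<^sub>m (rdim N v) (rdim G v)" if "v < nv Q" for v
    using fun_cong[OF z, of v] that by (simp add: comp_apply zeroh_apply)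
  define g where "g = (\<lambda>v. if v < nv Q then r v * f v else 0\<^sub>m 0 0)"
  have "g \<in> hom Q G M"
  proof (rule homI)
    fix a assume a: "a < length (arr Q)"
    have "r (tgt Q a) * (rmat K a * f (src Q a)) = r (tgt Q a) * (f (tgt Q a) * rmat G a)"
      using a by (simp add: hom_comm[OF f a])
    then show "rmat M a * g (src Q a) = g (tgt Q a) * rmat G a"
      using a unfolding g_def by (simp add: retraction_rmat_mult pf mat_arith)
  qed (auto simp: g_def intro!: carrier_matI)
  moreover have "comp Q \<iota> g = f"
  proof
    fix v show "comp Q \<iota> g v = f v"
    proof (cases "v < nv Q")
      case True
      then have "(\<iota> v * r v + s v * p v) * f v = f v" by (simp add: splitting_eqs[OF spl])
      then show ?thesis using True unfolding g_def by (simp add: comp_apply mat_arith pf)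
    qed (simp add: comp_def hom_outside[OF f])
  qed
  ultimately show "\<exists>g\<in>hom Q G M. comp Q \<iota> g = f" by blast
next
  assume "\<exists>g\<in>hom Q G M. comp Q \<iota> g = f"
  then obtain g where g: "g \<in> hom Q G M" and gf: "comp Q \<iota> g = f" by blast
  show "comp Q p f = zeroh Q G N"
    unfolding gf[symmetric]
    by (auto simp: fun_eq_iff comp_def zeroh_def G_dims hom_dims[OF g] splitting_eqs_mult[OF spl ses])
qed

lemma pullback_if_push_\<iota>_zero:
  assumes h: "cocycle Q G M h"
    and "cohomologous Q G K (\<lambda>a. \<iota> (tgt Q a) * h a) (zero_cocycle Q G K)"
  shows "\<exists>f\<in>hom Q G N. cohomologous Q G M h (\<lambda>a. \<kappa> a * f (src Q a))"
proof -
  from assms(2) obtain w where w: "cochain Q G K w" and eq: "\<And>a. a < length (arr Q) \<Longrightarrow>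
      \<iota> (tgt Q a) * h a + w (tgt Q a) * rmat G a = rmat K a * w (src Q a) + zero_cocycle Q G K a"
    unfolding cohomologous_def by blast
  note [simp] = G_dims cochain_dims[OF w] cocycle_dims[OF h]
  have Kw: "rmat K a * w (src Q a) = \<iota> (tgt Q a) * h a + w (tgt Q a) * rmat G a"
    if a: "a < length (arr Q)" for a
    using eq[OF a] a by (simp add: zero_cocycle_def mat_arith)
  define f where "f = (\<lambda>v. if v < nv Q then p v * w v else 0\<^sub>m 0 0)"
  have f: "f \<in> hom Q G N"
  proof (rule homI)
    fix a assume a: "a < length (arr Q)"
    show "rmat N a * f (src Q a) = f (tgt Q a) * rmat G a"
      using a unfolding f_def
      by (simp add: hom_comm_mult[OF wf valid_K valid_N hom_p] Kw mat_arith splitting_eqs_mult[OF spl ses])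
  qed (auto simp: f_def intro!: carrier_matI)
  have "cohomologous Q G M h (\<lambda>a. \<kappa> a * f (src Q a))"
  proof (rule cohomologousI[OF h cocycle_mult_right[OF wf split_cocycle_cocycle f]])
    show "cochain Q G M (\<lambda>v. r v * w v)" unfolding cochain_def by (auto intro!: carrier_matI)
    fix a assume a: "a < length (arr Q)"
    have "r (tgt Q a) * (rmat K a * w (src Q a)) =
        rmat M a * (r (src Q a) * w (src Q a)) + \<kappa> a * (p (src Q a) * w (src Q a))"
      using a by (simp add: retraction_rmat_mult)
    then show "h a + r (tgt Q a) * w (tgt Q a) * rmat G a =
        rmat M a * (r (src Q a) * w (src Q a)) + \<kappa> a * f (src Q a)"
      using a by (simp add: Kw f_def mat_arith splitting_eqs_mult[OF spl ses])
  qed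
  with f show "\<exists>f\<in>hom Q G N. cohomologous Q G M h (\<lambda>a. \<kappa> a * f (src Q a))" by blast
qed

lemma push_\<iota>_zero_if_pullback:
  assumes h: "cocycle Q G M h" and f: "f \<in> hom Q G N"
    and "cohomologous Q G M h (\<lambda>a. \<kappa> a * f (src Q a))"
  shows "cohomologous Q G K (\<lambda>a. \<iota> (tgt Q a) * h a) (zero_cocycle Q G K)"
proof -
  from assms(3) obtain u where u: "cochain Q G M u" and eq: "\<And>a. a < length (arr Q) \<Longrightarrow>
      h a + u (tgt Q a) * rmat G a = rmat M a * u (src Q a) + \<kappa> a * f (src Q a)"
    unfolding cohomologous_def by blast
  note [simp] = G_dims cochain_dims[OF u] cocycle_dims[OF h] hom_dims[OF f]
  show "cohomologous Q G K (\<lambda>a. \<iota> (tgt Q a) * h a) (zero_cocycle Q G K)"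
  proof (rule cohomologousI[OF cocycle_mult_left[OF wf h hom_\<iota>] cocycle_zero_cocycle])
    show "cochain Q G K (\<lambda>v. \<iota> v * u v + s v * f v)" unfolding cochain_def by (auto intro!: carrier_matI)
    fix a assume a: "a < length (arr Q)"
    have "\<iota> (tgt Q a) * h a + \<iota> (tgt Q a) * (u (tgt Q a) * rmat G a) =
        \<iota> (tgt Q a) * (rmat M a * u (src Q a)) + \<iota> (tgt Q a) * (\<kappa> a * f (src Q a))"
      using arg_cong[OF eq[OF a], of "\<lambda>A. \<iota> (tgt Q a) * A"] a by (simp add: mat_arith)
    then have "\<iota> (tgt Q a) * h a + (\<iota> (tgt Q a) * u (tgt Q a) + s (tgt Q a) * f (tgt Q a)) * rmat G a =
        (\<iota> (tgt Q a) * (rmat M a * u (src Q a)) + \<iota> (tgt Q a) * (\<kappa> a * f (src Q a))) +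
        s (tgt Q a) * (f (tgt Q a) * rmat G a)"
      using a by (simp add: mat_arith) (auto simp: mat_eq_iff)
    also have "\<dots> = rmat K a * (\<iota> (src Q a) * u (src Q a) + s (src Q a) * f (src Q a)) +
        zero_cocycle Q G K a"
      using a by (simp add: zero_cocycle_def mat_arith rmat_section_mult hom_comm[OF f a]
          hom_comm_mult[OF wf valid_M valid_K hom_\<iota>]) (auto simp: mat_eq_iff)
    finally show "\<iota> (tgt Q a) * h a + (\<iota> (tgt Q a) * u (tgt Q a) + s (tgt Q a) * f (tgt Q a)) * rmat G a =
        rmat K a * (\<iota> (src Q a) * u (src Q a) + s (src Q a) * f (src Q a)) + zero_cocycle Q G K a" .
  qed
qed

lemma push_\<iota>_cocycle_exact:
  assumes h: "cocycle Q G M h"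
  shows "cohomologous Q G K (\<lambda>a. \<iota> (tgt Q a) * h a) (zero_cocycle Q G K) \<longleftrightarrow>
    (\<exists>f\<in>hom Q G N. cohomologous Q G M h (\<lambda>a. \<kappa> a * f (src Q a)))"
  using pullback_if_push_\<iota>_zero[OF h] push_\<iota>_zero_if_pullback[OF h] by blast

lemma push_\<iota>_if_push_p_zero:
  assumes h: "cocycle Q G K h"
    and "cohomologous Q G N (\<lambda>a. p (tgt Q a) * h a) (zero_cocycle Q G N)"
  shows "\<exists>d. cocycle Q G M d \<and> cohomologous Q G K h (\<lambda>a. \<iota> (tgt Q a) * d a)"
proof -
  from assms(2) obtain w where w: "cochain Q G N w" and eq: "\<And>a. a < length (arr Q) \<Longrightarrow>
      p (tgt Q a) * h a + w (tgt Q a) * rmat G a = rmat N a * w (src Q a) + zero_cocycle Q G N a"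
    unfolding cohomologous_def by blast
  note [simp] = G_dims cochain_dims[OF w] cocycle_dims[OF h]
  define u where "u = (\<lambda>v. s v * w v)"
  define H where "H = (\<lambda>a. h a + u (tgt Q a) * rmat G a - rmat K a * u (src Q a))"
  have [simp]: "dim_row (H a) = rdim K (tgt Q a)" "dim_col (H a) = rdim G (src Q a)"
    if "a < length (arr Q)" for a
    using that unfolding H_def u_def by simp_all
  have pH: "p (tgt Q a) * H a = 0\<^sub>m (rdim N (tgt Q a)) (rdim G (src Q a))"
    if a: "a < length (arr Q)" for a
  proof -
    have "p (tgt Q a) * H a = p (tgt Q a) * h a + w (tgt Q a) * rmat G a - rmat N a * w (src Q a)"
      using a unfolding H_def u_def
      by (simp add: mat_arith hom_comm_mult[OF wf valid_K valid_N hom_p, symmetric]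
          splitting_eqs_mult[OF spl ses])
    then show ?thesis using eq[OF a] a by (simp add: zero_cocycle_def mat_arith minus_self_mat_dim)
  qed
  have \<iota>rH: "\<iota> (tgt Q a) * (r (tgt Q a) * H a) = H a" if a: "a < length (arr Q)" for a
  proof -
    have "H a = (\<iota> (tgt Q a) * r (tgt Q a) + s (tgt Q a) * p (tgt Q a)) * H a"
      using a by (simp add: splitting_eqs[OF spl])
    then show ?thesis using a pH[OF a] by (simp add: mat_arith)
  qed
  have "cocycle Q G M (\<lambda>a. r (tgt Q a) * H a)"
    unfolding cocycle_def by (auto intro!: carrier_matI)
  moreover have "cohomologous Q G K h (\<lambda>a. \<iota> (tgt Q a) * (r (tgt Q a) * H a))"
  proof (rule cohomologousI[OF h])
    show "cocycle Q G K (\<lambda>a. \<iota> (tgt Q a) * (r (tgt Q a) * H a))"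
      unfolding cocycle_def by (auto intro!: carrier_matI)
    show "cochain Q G K u" unfolding cochain_def u_def by (auto intro!: carrier_matI)
    fix a assume a: "a < length (arr Q)"
    show "h a + u (tgt Q a) * rmat G a = rmat K a * u (src Q a) + \<iota> (tgt Q a) * (r (tgt Q a) * H a)"
      unfolding \<iota>rH[OF a] unfolding H_def
      by (rule add_diff_cancel_mat[symmetric]; rule carrier_matI) (use a in \<open>simp_all add: u_def\<close>)
  qed
  ultimately show "\<exists>d. cocycle Q G M d \<and> cohomologous Q G K h (\<lambda>a. \<iota> (tgt Q a) * d a)" by blast
qed

lemma push_p_zero_if_push_\<iota>:
  assumes h: "cocycle Q G K h" and d: "cocycle Q G M d"
    and "cohomologous Q G K h (\<lambda>a. \<iota> (tgt Q a) * d a)"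
  shows "cohomologous Q G N (\<lambda>a. p (tgt Q a) * h a) (zero_cocycle Q G N)"
proof -
  from assms(3) obtain u where u: "cochain Q G K u" and eq: "\<And>a. a < length (arr Q) \<Longrightarrow>
      h a + u (tgt Q a) * rmat G a = rmat K a * u (src Q a) + \<iota> (tgt Q a) * d a"
    unfolding cohomologous_def by blast
  note [simp] = G_dims cochain_dims[OF u] cocycle_dims[OF h] cocycle_dims[OF d]
  show "cohomologous Q G N (\<lambda>a. p (tgt Q a) * h a) (zero_cocycle Q G N)"
  proof (rule cohomologousI[OF cocycle_mult_left[OF wf h hom_p] cocycle_zero_cocycle])
    show "cochain Q G N (\<lambda>v. p v * u v)" unfolding cochain_def by (auto intro!: carrier_matI)
    fix a assume a: "a < length (arr Q)"
    show "p (tgt Q a) * h a + p (tgt Q a) * u (tgt Q a) * rmat G a =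
        rmat N a * (p (src Q a) * u (src Q a)) + zero_cocycle Q G N a"
      using arg_cong[OF eq[OF a], of "\<lambda>A. p (tgt Q a) * A"] a
      by (simp add: zero_cocycle_def mat_arith hom_comm_mult[OF wf valid_K valid_N hom_p]
          splitting_eqs_mult[OF spl ses])
  qed
qed

lemma push_p_cocycle_exact:
  assumes h: "cocycle Q G K h"
  shows "cohomologous Q G N (\<lambda>a. p (tgt Q a) * h a) (zero_cocycle Q G N) \<longleftrightarrow>
    (\<exists>d. cocycle Q G M d \<and> cohomologous Q G K h (\<lambda>a. \<iota> (tgt Q a) * d a))"
  using push_\<iota>_if_push_p_zero[OF h] push_p_zero_if_push_\<iota>[OF h] by blast

lemma push_p_cocycle_surj:
  assumes h: "cocycle Q G N h"
  shows "\<exists>d. cocycle Q G K d \<and> cohomologous Q G N (\<lambda>a. p (tgt Q a) * d a) h"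
proof (intro exI conjI)
  note [simp] = G_dims cocycle_dims[OF h]
  show "cocycle Q G K (\<lambda>a. s (tgt Q a) * h a)" unfolding cocycle_def by (auto intro!: carrier_matI)
  have "cohomologous Q G N (\<lambda>a. p (tgt Q a) * (s (tgt Q a) * h a)) h = cohomologous Q G N h h"
    by (rule cohomologous_cong) (simp_all add: splitting_eqs_mult[OF spl ses])
  then show "cohomologous Q G N (\<lambda>a. p (tgt Q a) * (s (tgt Q a) * h a)) h"
    using cohomologous_refl[OF wf valid_G valid_N h] by simp
qed

lemmas Ext1_G = Ext1_eq_cocycle_classes[OF wf valid_G]
lemmas split_cls_G = split_cls_eq_cocycle_cls_zero[OF wf, of G]
lemmas cocycle_cls_eq_iff_G = cocycle_cls_eq_iff[OF wf valid_G]

lemma connecting_exact_at_N: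
  assumes f: "f \<in> hom Q G N"
  shows "pull Q G N M f \<eta> = split_cls Q G M \<longleftrightarrow> (\<exists>g\<in>hom Q G K. comp Q p g = f)"
proof -
  have "pull Q G N M f \<eta> = cocycle_cls Q G M (\<lambda>a. \<kappa> a * f (src Q a))"
    unfolding \<eta>_eq by (rule pull_cocycle_cls[OF wf valid_N valid_M valid_G split_cocycle_cocycle f])
  then show ?thesis
    unfolding split_cls_G lift_iff_cohomologous_zero[OF valid_G f]
    using cocycle_cls_eq_iff_G[OF valid_M cocycle_zero_cocycle] by (simp add: eq_commute)
qed

lemma Ext_exact_at_M:
  assumes c: "c \<in> Ext1 Q G M"
  shows "push Q G M K \<iota> c = split_cls Q G K \<longleftrightarrow> (\<exists>g\<in>hom Q G N. pull Q G N M g \<eta> = c)"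
proof -
  obtain h where h: "cocycle Q G M h" and c: "c = cocycle_cls Q G M h"
    using c unfolding Ext1_G[OF valid_M] by blast
  have push: "push Q G M K \<iota> c = cocycle_cls Q G K (\<lambda>a. \<iota> (tgt Q a) * h a)"
    unfolding c by (rule push_cocycle_cls[OF wf valid_G valid_M valid_K h hom_\<iota>])
  have pull: "pull Q G N M g \<eta> = cocycle_cls Q G M (\<lambda>a. \<kappa> a * g (src Q a))" if "g \<in> hom Q G N" for g
    unfolding \<eta>_eq by (rule pull_cocycle_cls[OF wf valid_N valid_M valid_G split_cocycle_cocycle that])
  show ?thesis
    unfolding push split_cls_G cocycle_cls_eq_iff_G[OF valid_K cocycle_mult_left[OF wf h hom_\<iota>]]
      push_\<iota>_cocycle_exact[OF h]
    using pull cocycle_cls_eq_iff_G[OF valid_M h] unfolding c by (auto simp: eq_commute)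
qed

lemma Ext_exact_at_K:
  assumes c: "c \<in> Ext1 Q G K"
  shows "push Q G K N p c = split_cls Q G N \<longleftrightarrow> (\<exists>d\<in>Ext1 Q G M. push Q G M K \<iota> d = c)"
proof -
  obtain h where h: "cocycle Q G K h" and c: "c = cocycle_cls Q G K h"
    using c unfolding Ext1_G[OF valid_K] by blast
  have push_p: "push Q G K N p c = cocycle_cls Q G N (\<lambda>a. p (tgt Q a) * h a)"
    unfolding c by (rule push_cocycle_cls[OF wf valid_G valid_K valid_N h hom_p])
  have push_\<iota>: "push Q G M K \<iota> (cocycle_cls Q G M d) = cocycle_cls Q G K (\<lambda>a. \<iota> (tgt Q a) * d a)"
    if "cocycle Q G M d" for d
    by (rule push_cocycle_cls[OF wf valid_G valid_M valid_K that hom_\<iota>])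
  show ?thesis
    unfolding push_p split_cls_G cocycle_cls_eq_iff_G[OF valid_N cocycle_mult_left[OF wf h hom_p]]
      push_p_cocycle_exact[OF h] Ext1_G[OF valid_M]
    using push_\<iota> cocycle_cls_eq_iff_G[OF valid_K h] unfolding c by (auto simp: eq_commute)
qed

lemma Ext_surj_at_N:
  assumes c: "c \<in> Ext1 Q G N"
  shows "\<exists>d\<in>Ext1 Q G K. push Q G K N p d = c"
proof -
  obtain h where h: "cocycle Q G N h" and c: "c = cocycle_cls Q G N h"
    using c unfolding Ext1_G[OF valid_N] by blast
  obtain d where d: "cocycle Q G K d" and dh: "cohomologous Q G N (\<lambda>a. p (tgt Q a) * d a) h"
    using push_p_cocycle_surj[OF h] by blast
  have "push Q G K N p (cocycle_cls Q G K d) = c"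
    unfolding c push_cocycle_cls[OF wf valid_G valid_K valid_N d hom_p]
    using cocycle_cls_eq_iff_G[OF valid_N cocycle_mult_left[OF wf d hom_p]] dh by blast
  then show ?thesis using d unfolding Ext1_G[OF valid_K] by blast
qed

end


text \<open>Since \<open>Hom(G[j], X[i])\<close> vanishes unless \<open>j \<in> {i, i - 1}\<close>, a morphism \<open>P \<rightarrow> X[i]\<close> is a pair:
  a component \<open>a\<close> on \<open>G[i]\<close> and, for \<open>i > 0\<close>, a component \<open>b\<close> on \<open>G[i - 1]\<close>.\<close>

definition homP_pair :: "nat \<Rightarrow> nat \<Rightarrow> 'k smor \<Rightarrow> 'k smor \<Rightarrow> nat \<Rightarrow> 'k smor" where
  "homP_pair k i a b = (\<lambda>l. if l \<le> k then (if l = i then a else if Suc l = i then b else SZero) else SZero)"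

lemma homP_iff_pair:
  assumes "i \<le> k"
  shows "\<phi> \<in> homP Q G k X i \<longleftrightarrow>
    (\<exists>f\<in>hom Q G X. \<exists>c. (0 < i \<longrightarrow> c \<in> Ext1 Q G X) \<and> \<phi> = homP_pair k i (SHom f) (SExt c))"
proof
  assume \<phi>: "\<phi> \<in> homP Q G k X i"
  then have "\<phi> i \<in> SHom ` hom Q G X" using assms unfolding homP_def shom_def by auto
  then obtain f where f: "f \<in> hom Q G X" and \<phi>i: "\<phi> i = SHom f" by blast
  obtain c where c: "0 < i \<longrightarrow> c \<in> Ext1 Q G X \<and> \<phi> (i - 1) = SExt c"
  proof (cases i)
    case (Suc j)
    then have "\<phi> j \<in> shom Q G j X i" using \<phi> assms unfolding homP_def by simp
    then have "\<phi> j \<in> SExt ` Ext1 Q G X" using Suc unfolding shom_def by simp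
    then show ?thesis using that Suc by auto
  qed (use that in blast)
  have "\<phi> l = homP_pair k i (SHom f) (SExt c) l" for l
    using \<phi> \<phi>i c unfolding homP_def shom_def homP_pair_def
    by (cases "l \<le> k"; cases "l = i"; cases "Suc l = i") (auto simp: not_le)
  with f c show "\<exists>f\<in>hom Q G X. \<exists>c. (0 < i \<longrightarrow> c \<in> Ext1 Q G X) \<and> \<phi> = homP_pair k i (SHom f) (SExt c)"
    by blast
qed (auto simp: homP_def homP_pair_def shom_def)

lemma homP_pair_eq_iff:
  assumes "i \<le> k"
  shows "homP_pair k i a b = homP_pair k i a' b' \<longleftrightarrow> a = a' \<and> (0 < i \<longrightarrow> b = b')"
proof
  assume eq: "homP_pair k i a b = homP_pair k i a' b'"
  have "a = a'" using fun_cong[OF eq, of i] assms unfolding homP_pair_def by simp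
  moreover have "b = b'" if "0 < i"
    using fun_cong[OF eq, of "i - 1"] assms that unfolding homP_pair_def by (cases i) auto
  ultimately show "a = a' \<and> (0 < i \<longrightarrow> b = b')" by blast
qed (auto simp: homP_pair_def fun_eq_iff)

lemma zeroP_eq_pair: "zeroP Q G k X i = homP_pair k i (SHom (zeroh Q G X)) (SExt (split_cls Q G X))"
  unfolding zeroP_def homP_pair_def szero_def by (auto simp: fun_eq_iff)

lemma homP_map_SHom_pair:
  "homP_map Q G k X Y i (SHom g) (homP_pair k i (SHom f) (SExt c)) =
    homP_pair k i (SHom (comp Q g f)) (SExt (push Q G X Y g c))"
  unfolding homP_map_def homP_pair_def scomp_def szero_def by (auto simp: fun_eq_iff)

lemma homP_map_SExt_pair:
  "homP_map Q G k N M (Suc i) (SExt e) (homP_pair k i (SHom f) (SExt c)) =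
    homP_pair k (Suc i) (SHom (zeroh Q G M)) (SExt (pull Q G N M f e))"
  unfolding homP_map_def homP_pair_def scomp_def szero_def by (auto simp: fun_eq_iff)

lemma seq_simps:
  "seq_obj M K N (3 * i) = M" "seq_obj M K N (3 * i + 1) = K" "seq_obj M K N (3 * i + 2) = N"
  "seq_shift (3 * i) = i" "seq_shift (3 * i + 1) = i" "seq_shift (3 * i + 2) = i"
  unfolding seq_obj_def seq_shift_def by (simp_all add: mod_Suc div_Suc)

lemma induced_simps:
  "induced Q G k M K N \<iota> p (3 * i) = homP_map Q G k M K i (SHom \<iota>)"
  "induced Q G k M K N \<iota> p (3 * i + 1) = homP_map Q G k K N i (SHom p)"
  "induced Q G k M K N \<iota> p (3 * i + 2) = homP_map Q G k N M (Suc i) (SExt (ext_cls Q N M (K, \<iota>, p)))"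
  unfolding induced_def seq_obj_def seq_shift_def seq_map_def by (simp_all add: mod_Suc div_Suc)

lemma split_cls_in_Ext1:
  assumes "wf_quiver Q" "valid_rep Q G" "valid_rep Q X"
  shows "split_cls Q G X \<in> Ext1 Q G X"
  unfolding split_cls_eq_cocycle_cls_zero[OF assms(1)] Ext1_eq_cocycle_classes[OF assms]
  using cocycle_zero_cocycle by blast


section \<open>Exactness of the induced sequence\<close>

context ses_module
begin

lemma exact_at_M0:
  assumes \<phi>: "\<phi> \<in> homP Q G k M 0" and "homP_map Q G k M K 0 (SHom \<iota>) \<phi> = zeroP Q G k K 0"
  shows "\<phi> = zeroP Q G k M 0"
proof -
  obtain f c where f: "f \<in> hom Q G M" and \<phi>_eq: "\<phi> = homP_pair k 0 (SHom f) (SExt c)"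
    using \<phi> by (auto simp: homP_iff_pair)
  have "comp Q \<iota> f = zeroh Q G K"
    using assms(2) unfolding \<phi>_eq homP_map_SHom_pair zeroP_eq_pair homP_pair_eq_iff[OF le0] by simp
  then show ?thesis
    unfolding \<phi>_eq zeroP_eq_pair homP_pair_eq_iff[OF le0] using Hom_exact_at_M[OF f] by simp
qed

lemma exact_at_M:
  assumes jk: "Suc j \<le> k" and \<phi>: "\<phi> \<in> homP Q G k M (Suc j)"
  shows "homP_map Q G k M K (Suc j) (SHom \<iota>) \<phi> = zeroP Q G k K (Suc j) \<longleftrightarrow>
    (\<exists>\<psi>\<in>homP Q G k N j. homP_map Q G k N M (Suc j) (SExt \<eta>) \<psi> = \<phi>)"
proof -
  obtain f c where f: "f \<in> hom Q G M" and c: "c \<in> Ext1 Q G M"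
    and \<phi>_eq: "\<phi> = homP_pair k (Suc j) (SHom f) (SExt c)"
    using \<phi> by (auto simp: homP_iff_pair[OF jk])
  have "homP_map Q G k M K (Suc j) (SHom \<iota>) \<phi> = zeroP Q G k K (Suc j) \<longleftrightarrow>
      f = zeroh Q G M \<and> push Q G M K \<iota> c = split_cls Q G K"
    unfolding \<phi>_eq homP_map_SHom_pair zeroP_eq_pair homP_pair_eq_iff[OF jk]
    by (simp add: Hom_exact_at_M[OF f])
  also have "\<dots> \<longleftrightarrow> (\<exists>\<psi>\<in>homP Q G k N j. homP_map Q G k N M (Suc j) (SExt \<eta>) \<psi> = \<phi>)"
  proof
    assume "f = zeroh Q G M \<and> push Q G M K \<iota> c = split_cls Q G K"
    then obtain g where f0: "f = zeroh Q G M" and g: "g \<in> hom Q G N" and gc: "pull Q G N M g \<eta> = c"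
      using Ext_exact_at_M[OF c] by blast
    have "homP_pair k j (SHom g) (SExt (split_cls Q G N)) \<in> homP Q G k N j"
      using jk g split_cls_in_Ext1[OF wf valid_G valid_N] by (auto simp: homP_iff_pair)
    moreover have "homP_map Q G k N M (Suc j) (SExt \<eta>) (homP_pair k j (SHom g) (SExt (split_cls Q G N))) = \<phi>"
      unfolding \<phi>_eq homP_map_SExt_pair homP_pair_eq_iff[OF jk] using f0 gc by simp
    ultimately show "\<exists>\<psi>\<in>homP Q G k N j. homP_map Q G k N M (Suc j) (SExt \<eta>) \<psi> = \<phi>" by blast
  next
    assume "\<exists>\<psi>\<in>homP Q G k N j. homP_map Q G k N M (Suc j) (SExt \<eta>) \<psi> = \<phi>"
    then obtain \<psi> where \<psi>: "\<psi> \<in> homP Q G k N j" and \<psi>\<phi>: "homP_map Q G k N M (Suc j) (SExt \<eta>) \<psi> = \<phi>"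
      by blast
    from \<psi> obtain g d where g: "g \<in> hom Q G N" and \<psi>_eq: "\<psi> = homP_pair k j (SHom g) (SExt d)"
      using jk by (auto simp: homP_iff_pair)
    have "f = zeroh Q G M" and "pull Q G N M g \<eta> = c"
      using \<psi>\<phi> unfolding \<psi>_eq \<phi>_eq homP_map_SExt_pair homP_pair_eq_iff[OF jk] by simp_all
    with g show "f = zeroh Q G M \<and> push Q G M K \<iota> c = split_cls Q G K"
      using Ext_exact_at_M[OF c] by blast
  qed
  finally show ?thesis .
qed

lemma exact_at_K:
  assumes ik: "i \<le> k" and \<phi>: "\<phi> \<in> homP Q G k K i"
  shows "homP_map Q G k K N i (SHom p) \<phi> = zeroP Q G k N i \<longleftrightarrow>
    (\<exists>\<psi>\<in>homP Q G k M i. homP_map Q G k M K i (SHom \<iota>) \<psi> = \<phi>)"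
proof -
  obtain f c where f: "f \<in> hom Q G K" and c: "0 < i \<longrightarrow> c \<in> Ext1 Q G K"
    and \<phi>_eq: "\<phi> = homP_pair k i (SHom f) (SExt c)"
    using \<phi> by (auto simp: homP_iff_pair[OF ik])
  have "homP_map Q G k K N i (SHom p) \<phi> = zeroP Q G k N i \<longleftrightarrow>
      comp Q p f = zeroh Q G N \<and> (0 < i \<longrightarrow> push Q G K N p c = split_cls Q G N)"
    unfolding \<phi>_eq homP_map_SHom_pair zeroP_eq_pair homP_pair_eq_iff[OF ik] by simp
  also have "\<dots> \<longleftrightarrow> (\<exists>g\<in>hom Q G M. comp Q \<iota> g = f) \<and>
      (0 < i \<longrightarrow> (\<exists>d\<in>Ext1 Q G M. push Q G M K \<iota> d = c))"
    using Hom_exact_at_K[OF f] Ext_exact_at_K c by blast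
  also have "\<dots> \<longleftrightarrow> (\<exists>\<psi>\<in>homP Q G k M i. homP_map Q G k M K i (SHom \<iota>) \<psi> = \<phi>)"
  proof
    assume lift: "(\<exists>g\<in>hom Q G M. comp Q \<iota> g = f) \<and> (0 < i \<longrightarrow> (\<exists>d\<in>Ext1 Q G M. push Q G M K \<iota> d = c))"
    then obtain g where g: "g \<in> hom Q G M" and gf: "comp Q \<iota> g = f" by blast
    obtain d where d: "0 < i \<longrightarrow> d \<in> Ext1 Q G M \<and> push Q G M K \<iota> d = c"
      using lift by (cases "0 < i") auto
    have "homP_pair k i (SHom g) (SExt d) \<in> homP Q G k M i"
      using ik g d by (auto simp: homP_iff_pair)
    moreover have "homP_map Q G k M K i (SHom \<iota>) (homP_pair k i (SHom g) (SExt d)) = \<phi>"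
      unfolding \<phi>_eq homP_map_SHom_pair homP_pair_eq_iff[OF ik] using gf d by simp
    ultimately show "\<exists>\<psi>\<in>homP Q G k M i. homP_map Q G k M K i (SHom \<iota>) \<psi> = \<phi>" by blast
  next
    assume "\<exists>\<psi>\<in>homP Q G k M i. homP_map Q G k M K i (SHom \<iota>) \<psi> = \<phi>"
    then obtain \<psi> where \<psi>: "\<psi> \<in> homP Q G k M i" and \<psi>\<phi>: "homP_map Q G k M K i (SHom \<iota>) \<psi> = \<phi>"
      by blast
    from \<psi> obtain g d where g: "g \<in> hom Q G M" and d: "0 < i \<longrightarrow> d \<in> Ext1 Q G M"
      and \<psi>_eq: "\<psi> = homP_pair k i (SHom g) (SExt d)"
      using ik by (auto simp: homP_iff_pair)
    show "(\<exists>g\<in>hom Q G M. comp Q \<iota> g = f) \<and> (0 < i \<longrightarrow> (\<exists>d\<in>Ext1 Q G M. push Q G M K \<iota> d = c))"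
      using \<psi>\<phi> g d unfolding \<psi>_eq \<phi>_eq homP_map_SHom_pair homP_pair_eq_iff[OF ik] by auto
  qed
  finally show ?thesis .
qed

lemma exact_at_N:
  assumes ik: "Suc i \<le> k" and \<phi>: "\<phi> \<in> homP Q G k N i"
  shows "homP_map Q G k N M (Suc i) (SExt \<eta>) \<phi> = zeroP Q G k M (Suc i) \<longleftrightarrow>
    (\<exists>\<psi>\<in>homP Q G k K i. homP_map Q G k K N i (SHom p) \<psi> = \<phi>)"
proof -
  have ik': "i \<le> k" using ik by simp
  obtain f c where f: "f \<in> hom Q G N" and c: "0 < i \<longrightarrow> c \<in> Ext1 Q G N"
    and \<phi>_eq: "\<phi> = homP_pair k i (SHom f) (SExt c)"
    using \<phi> by (auto simp: homP_iff_pair[OF ik'])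
  have "homP_map Q G k N M (Suc i) (SExt \<eta>) \<phi> = zeroP Q G k M (Suc i) \<longleftrightarrow>
      pull Q G N M f \<eta> = split_cls Q G M"
    unfolding \<phi>_eq homP_map_SExt_pair zeroP_eq_pair homP_pair_eq_iff[OF ik] by simp
  also have "\<dots> \<longleftrightarrow> (\<exists>g\<in>hom Q G K. comp Q p g = f)" by (rule connecting_exact_at_N[OF f])
  also have "\<dots> \<longleftrightarrow> (\<exists>\<psi>\<in>homP Q G k K i. homP_map Q G k K N i (SHom p) \<psi> = \<phi>)"
  proof
    assume "\<exists>g\<in>hom Q G K. comp Q p g = f"
    then obtain g where g: "g \<in> hom Q G K" and gf: "comp Q p g = f" by blast
    obtain d where d: "0 < i \<longrightarrow> d \<in> Ext1 Q G K \<and> push Q G K N p d = c"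
      using Ext_surj_at_N c by (cases "0 < i") auto
    have "homP_pair k i (SHom g) (SExt d) \<in> homP Q G k K i"
      using ik' g d by (auto simp: homP_iff_pair)
    moreover have "homP_map Q G k K N i (SHom p) (homP_pair k i (SHom g) (SExt d)) = \<phi>"
      unfolding \<phi>_eq homP_map_SHom_pair homP_pair_eq_iff[OF ik'] using gf d by simp
    ultimately show "\<exists>\<psi>\<in>homP Q G k K i. homP_map Q G k K N i (SHom p) \<psi> = \<phi>" by blast
  next
    assume "\<exists>\<psi>\<in>homP Q G k K i. homP_map Q G k K N i (SHom p) \<psi> = \<phi>"
    then obtain \<psi> where \<psi>: "\<psi> \<in> homP Q G k K i" and \<psi>\<phi>: "homP_map Q G k K N i (SHom p) \<psi> = \<phi>"
      by blast
    from \<psi> obtain g d where g: "g \<in> hom Q G K" and \<psi>_eq: "\<psi> = homP_pair k i (SHom g) (SExt d)"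
      using ik' by (auto simp: homP_iff_pair)
    show "\<exists>g\<in>hom Q G K. comp Q p g = f"
      using \<psi>\<phi> g unfolding \<psi>_eq \<phi>_eq homP_map_SHom_pair homP_pair_eq_iff[OF ik'] by auto
  qed
  finally show ?thesis .
qed

lemma exact_at_position:
  assumes "1 \<le> m" "m \<le> 3 * k + 1" and \<phi>: "\<phi> \<in> homP Q G k (seq_obj M K N m) (seq_shift m)"
  shows "induced Q G k M K N \<iota> p m \<phi> = zeroP Q G k (seq_obj M K N (Suc m)) (seq_shift (Suc m)) \<longleftrightarrow>
    (\<exists>\<psi>\<in>homP Q G k (seq_obj M K N (m - 1)) (seq_shift (m - 1)). induced Q G k M K N \<iota> p (m - 1) \<psi> = \<phi>)"
proof -
  have "(\<exists>j. m = 3 * Suc j) \<or> (\<exists>i. m = 3 * i + 1) \<or> (\<exists>i. m = 3 * i + 2)"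
    using \<open>1 \<le> m\<close> by presburger
  then consider (at_M) j where "m = 3 * Suc j" | (at_K) i where "m = 3 * i + 1"
    | (at_N) i where "m = 3 * i + 2"
    by blast
  then show ?thesis
  proof cases
    case at_M
    have e: "Suc (3 * Suc j) = 3 * Suc j + 1" "3 * Suc j - 1 = 3 * j + 2" by simp_all
    have "Suc j \<le> k" using at_M assms(2) by simp
    from exact_at_M[OF this] show ?thesis using \<phi> unfolding at_M e seq_simps induced_simps .
  next
    case at_K
    have e: "Suc (3 * i + 1) = 3 * i + 2" "3 * i + 1 - 1 = 3 * i" by simp_all
    have "i \<le> k" using at_K assms(2) by simp
    from exact_at_K[OF this] show ?thesis using \<phi> unfolding at_K e seq_simps induced_simps .
  next
    case at_N
    have e: "Suc (3 * i + 2) = 3 * Suc i" "3 * i + 2 - 1 = 3 * i + 1" by simp_all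
    have "Suc i \<le> k" using at_N assms(2) by simp
    from exact_at_N[OF this] show ?thesis using \<phi> unfolding at_N e seq_simps induced_simps .
  qed
qed

end


theorem lemma2p1:
  fixes Q :: quiver and M K N G :: "'k::field rep" and \<iota> p :: "'k rhom" and k :: nat
  assumes "dynkin Q"
    and "k \<ge> 1"
    and "ses Q M K N \<iota> p"
    and "is_basic_generator Q G"
  shows "(\<forall>\<phi>\<in>homP Q G k M 0.
            induced Q G k M K N \<iota> p 0 \<phi> = zeroP Q G k K 0 \<longrightarrow> \<phi> = zeroP Q G k M 0)
       \<and> (\<forall>m. 1 \<le> m \<and> m \<le> 3 * k + 1 \<longrightarrow>
            (\<forall>\<phi>\<in>homP Q G k (seq_obj M K N m) (seq_shift m).
               induced Q G k M K N \<iota> p m \<phi> = zeroP Q G k (seq_obj M K N (Suc m)) (seq_shift (Suc m))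
               \<longleftrightarrow> (\<exists>\<psi>\<in>homP Q G k (seq_obj M K N (m - 1)) (seq_shift (m - 1)).
                      induced Q G k M K N \<iota> p (m - 1) \<psi> = \<phi>)))"
proof -
  interpret ses_module Q M K N G \<iota> p
    using dynkin_imp_wf_quiver[OF assms(1)] assms(3) basic_generator_valid_rep[OF assms(4)]
    by unfold_locales
  have "induced Q G k M K N \<iota> p 0 = homP_map Q G k M K 0 (SHom \<iota>)"
    using induced_simps(1)[of Q G k M K N \<iota> p 0] by simp
  then show ?thesis using exact_at_M0 exact_at_position by auto
qed

end
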